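(* Let $\sigma\in\,]-\tfrac32,\tfrac12[$, $\sigma\neq-\tfrac12$, and let $(\lambda,\zeta)\in\mathbb{S}\times(\mathbb{Z}^2\setminus\{0\})$, $\zeta=(\xi,\eta)$, $\omega^2=\lambda+\nu|\zeta|^2$. The operator $$\mathcal{L}_0:\ (H^{\sigma+2}_\zeta)^2_{\mathrm{div}}\times\mathbb{C}\times H^{\sigma+2}_\zeta\to (H^{\sigma}_\zeta)^3,\qquad (u,v,p_0,\theta)\mapsto \begin{pmatrix}(\omega^2-\nu\partial_{zz})u+i\xi p_0\\ (\omega^2-\nu\partial_{zz})v+i\eta p_0\\ (\omega^2-\nu\partial_{zz})\theta\end{pmatrix}=\begin{pmatrix}f_1\\ f_2\\ f_3\end{pmatrix}$$ is continuous and bijective. Moreover $Y=(u,v)$ splits as $Y=Y_1+Y_2$ and, writing $F=(f_1,f_2)$, the following estimates hold with a constant $C$ independent of $(\lambda,\zeta)$: $$\begin{array}{lrcl} (a)&|\zeta|\,|p_0| &\leq& C\langle\omega\rangle^2 M_\sigma \|F\|_{\sigma,\zeta},\\ (b)&M_{-\sigma-2}[M_{-\sigma}]^{-1}\|Y_1\|_{\sigma,\zeta} + \|Y_1\|_{\sigma+2,\zeta} &\leq& C \langle\omega\rangle^2 M_\sigma M_{-\sigma-2}\|F\|_{\sigma,\zeta},\\ (c)&\langle\omega\rangle^2 \|Y_2\|_{\sigma,\zeta} + \|Y_2\|_{\sigma+2,\zeta} &\leq& C \|F\|_{\sigma,\zeta},\\ (d)& \langle\omega\rangle^2 \|\theta\|_{\sigma,\zeta}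 + \|\theta\|_{\sigma+2,\zeta} &\leq& C \|f_{3}\|_{\sigma,\zeta}. \end{array}$$
   Context: Let $a>0$, $\nu>0$, $\alpha,\beta,\gamma>0$ constants, $\Omega=\mathbb{T}^2\times(0,a)$. For $\zeta\in\mathbb{Z}^2\setminus\{0\}$ and $s\in\mathbb{R}$, $H^s_\zeta$ is the Hilbert space of functions $f(z)=\sum_{k\ge1}f_k e_k(z)$ on $(0,a)$, $e_k(z)=\sqrt{2/a}\sin(k\pi z/a)$, with norm $\|f\|_{s,\zeta}^2=\sum_{k\ge1}(1+\nu k^2+\nu|\zeta|^2)^s|f_k|^2$ (the same notation is used for the product norms on $(H^s_\zeta)^2$, $(H^s_\zeta)^3$), and $(H^{\sigma+2}_\zeta)^2_{\mathrm{div}}=\{(u,v)\in(H^{\sigma+2}_\zeta)^2:\int_0^a(\xi u+\eta v)\,dz=0\}$. Set $\langle\zeta\rangle=1+|\zeta|$, $\langle\omega\rangle^2=|\lambda|+\langle\zeta\rangle^2$ and $M_s(\lambda,\zeta)=\big(\sum_{k\ge1}\frac{1}{k^2(k^4+\langle\omega\rangle^4)(k^2+\langle\zeta\rangle^2)^s}\big)^{1/2}$ (defined for $s>-\tfrac52$). The set $\mathbb{S}=\{-\delta_2-\mu_1+i\mu_2:(\mu_1,\mu_2)\in\mathbb{R}^2,\ |\mu_2|\ge\mu_1/\delta_1\}$, where $0<\delta_2<\min(\frac{\nu\pi^2}{2a^2},\frac{\nu}{2})$ and $\delta_1>0$ is chosen small enough that $\mathbb{S}$ contains no eigenvalue of $-P$.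 Here $P$ is the linear Primitive Equations operator: with $\mathcal{H}$ (resp. $\mathcal{V}$) the closure in $L^2$ (resp. $H^1$) of smooth triples $X=(u,v,\theta)$ periodic in $x,y$, vanishing at $z=0,a$ and with $\int_0^a(\partial_x u+\partial_y v)dz=0$, inner products $(X,X')_{\mathcal{H}}=\int_\Omega(u\bar u'+v\bar v'+\frac{\beta}{\gamma}\theta\bar\theta')$, $(X,X')_{\mathcal{V}}=\int_\Omega(\nabla u\cdot\nabla\bar u'+\nabla v\cdot\nabla\bar v'+\frac{\beta}{\gamma}\nabla\theta\cdot\nabla\bar\theta')$, $w=-\int_0^z(\partial_xu+\partial_yv)$, $B(X,X')=-(\theta,w')_{L^2}+(w,\theta')_{L^2}$, $C(X,X')=-(v,u')_{L^2}+(u,v')_{L^2}$; $\lambda$ is an eigenvalue of $-P$ if there is $X\in\mathcal{V}\setminus\{0\}$ with $\lambda(X,X')_{\mathcal{H}}+\nu(X,X')_{\mathcal{V}}+\beta B(X,X')+\alpha C(X,X')=0$ for all $X'\in\mathcal{V}$. (Such a $\delta_1$ exists since all these eigenvalues satisfy $\Re\lambda\le-\nu\pi^2/a^2$ and $|\Im\lambda|\le2\alpha+2a\sqrt{\beta\gamma}\sqrt{-\Re\lambda/\nu}$.) *)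

theory Defs
  imports "HOL-Analysis.Analysis"
begin

text \<open>Elements of H^s_zeta are represented by their sine-coefficient sequences
  f_k (k >= 1) with respect to e_k(z) = sqrt(2/a) sin(k pi z / a); index 0 is unused
  and required to be 0 so that the representation is canonical.
  zeta = (xi, eta) in Z^2.\<close>

type_synonym cseq = "nat \<Rightarrow> complex"

definition zabs2 :: "int \<times> int \<Rightarrow> real" where
  "zabs2 \<zeta> = real_of_int (fst \<zeta>)^2 + real_of_int (snd \<zeta>)^2"

definition zabs :: "int \<times> int \<Rightarrow> real" where
  "zabs \<zeta> = sqrt (zabs2 \<zeta>)"

definition hweight :: "real \<Rightarrow> real \<Rightarrow> int \<times> int \<Rightarrow> nat \<Rightarrow> real" where
  "hweight \<nu> s \<zeta> k = (1 + \<nu> * real k ^ 2 + \<nu> * zabs2 \<zeta>) powr s"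

definition Hs :: "real \<Rightarrow> real \<Rightarrow> int \<times> int \<Rightarrow> cseq set" where
  "Hs \<nu> s \<zeta> = {f. f 0 = 0 \<and> summable (\<lambda>k. hweight \<nu> s \<zeta> k * (cmod (f k))^2)}"

definition hnorm :: "real \<Rightarrow> real \<Rightarrow> int \<times> int \<Rightarrow> cseq \<Rightarrow> real" where
  "hnorm \<nu> s \<zeta> f = sqrt (\<Sum>k. hweight \<nu> s \<zeta> k * (cmod (f k))^2)"

definition hnorm2 :: "real \<Rightarrow> real \<Rightarrow> int \<times> int \<Rightarrow> cseq \<times> cseq \<Rightarrow> real" where
  "hnorm2 \<nu> s \<zeta> Y = sqrt ((hnorm \<nu> s \<zeta> (fst Y))^2 + (hnorm \<nu> s \<zeta> (snd Y))^2)"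

definition hnorm3 :: "real \<Rightarrow> real \<Rightarrow> int \<times> int \<Rightarrow> cseq \<times> cseq \<times> cseq \<Rightarrow> real" where
  "hnorm3 \<nu> s \<zeta> F = sqrt ((hnorm \<nu> s \<zeta> (fst F))^2 + (hnorm \<nu> s \<zeta> (fst (snd F)))^2
                           + (hnorm \<nu> s \<zeta> (snd (snd F)))^2)"

text \<open>Sine coefficients of the constant function 1 on (0,a):
  int_0^a e_k = sqrt(2/a) * a (1 - (-1)^k) / (k pi).\<close>
definition onecoef :: "real \<Rightarrow> nat \<Rightarrow> real" where
  "onecoef a k = (if k = 0 then 0 else sqrt (2 / a) * a * (1 - (-1) ^ k) / (real k * pi))"

text \<open>int_0^a (xi u + eta v) dz = 0, expressed through the sine coefficients.\<close>
definition divfree :: "real \<Rightarrow> int \<times> int \<Rightarrow> cseq \<Rightarrow> cseq \<Rightarrow> bool" where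
  "divfree a \<zeta> u v \<longleftrightarrow>
     (\<Sum>k. complex_of_real (onecoef a k) *
            (of_int (fst \<zeta>) * u k + of_int (snd \<zeta>) * v k)) = 0"

definition L0dom :: "real \<Rightarrow> real \<Rightarrow> real \<Rightarrow> int \<times> int \<Rightarrow> (cseq \<times> cseq \<times> complex \<times> cseq) set" where
  "L0dom a \<nu> \<sigma> \<zeta> = {(u, v, p0, \<theta>). u \<in> Hs \<nu> (\<sigma> + 2) \<zeta> \<and> v \<in> Hs \<nu> (\<sigma> + 2) \<zeta>
        \<and> divfree a \<zeta> u v \<and> \<theta> \<in> Hs \<nu> (\<sigma> + 2) \<zeta>}"

definition L0cod :: "real \<Rightarrow> real \<Rightarrow> int \<times> int \<Rightarrow> (cseq \<times> cseq \<times> cseq) set" where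
  "L0cod \<nu> \<sigma> \<zeta> = Hs \<nu> \<sigma> \<zeta> \<times> Hs \<nu> \<sigma> \<zeta> \<times> Hs \<nu> \<sigma> \<zeta>"

definition L0domnorm :: "real \<Rightarrow> real \<Rightarrow> int \<times> int \<Rightarrow> cseq \<times> cseq \<times> complex \<times> cseq \<Rightarrow> real" where
  "L0domnorm \<nu> \<sigma> \<zeta> X = (case X of (u, v, p0, \<theta>) \<Rightarrow>
      sqrt ((hnorm \<nu> (\<sigma> + 2) \<zeta> u)^2 + (hnorm \<nu> (\<sigma> + 2) \<zeta> v)^2 + (cmod p0)^2
            + (hnorm \<nu> (\<sigma> + 2) \<zeta> \<theta>)^2))"

definition sub4 :: "cseq \<times> cseq \<times> complex \<times> cseq \<Rightarrow> cseq \<times> cseq \<times> complex \<times> cseq \<Rightarrow> cseq \<times> cseq \<times> complex \<times> cseq" where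
  "sub4 X X' = (case X of (u, v, p, t) \<Rightarrow> case X' of (u', v', p', t') \<Rightarrow>
      (\<lambda>k. u k - u' k, \<lambda>k. v k - v' k, p - p', \<lambda>k. t k - t' k))"

definition sub3 :: "cseq \<times> cseq \<times> cseq \<Rightarrow> cseq \<times> cseq \<times> cseq \<Rightarrow> cseq \<times> cseq \<times> cseq" where
  "sub3 F F' = (case F of (f1, f2, f3) \<Rightarrow> case F' of (g1, g2, g3) \<Rightarrow>
      (\<lambda>k. f1 k - g1 k, \<lambda>k. f2 k - g2 k, \<lambda>k. f3 k - g3 k))"

text \<open>omega^2 = lambda + nu |zeta|^2; the symbol of omega^2 - nu d_zz on e_k is
  omega^2 + nu (k pi / a)^2, since d_zz e_k = -(k pi/a)^2 e_k.\<close>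
definition omega2 :: "real \<Rightarrow> complex \<Rightarrow> int \<times> int \<Rightarrow> complex" where
  "omega2 \<nu> lam \<zeta> = lam + of_real (\<nu> * zabs2 \<zeta>)"

definition symb :: "real \<Rightarrow> real \<Rightarrow> complex \<Rightarrow> int \<times> int \<Rightarrow> nat \<Rightarrow> complex" where
  "symb a \<nu> lam \<zeta> k = omega2 \<nu> lam \<zeta> + of_real (\<nu> * (real k * pi / a)^2)"

definition L0 :: "real \<Rightarrow> real \<Rightarrow> complex \<Rightarrow> int \<times> int \<Rightarrow> cseq \<times> cseq \<times> complex \<times> cseq
                   \<Rightarrow> cseq \<times> cseq \<times> cseq" where
  "L0 a \<nu> lam \<zeta> X = (case X of (u, v, p0, \<theta>) \<Rightarrow>
     (\<lambda>k. symb a \<nu> lam \<zeta> k * u k + \<i> * of_int (fst \<zeta>) * p0 * of_real (onecoef a k),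
      \<lambda>k. symb a \<nu> lam \<zeta> k * v k + \<i> * of_int (snd \<zeta>) * p0 * of_real (onecoef a k),
      \<lambda>k. symb a \<nu> lam \<zeta> k * \<theta> k))"

definition L0_continuous :: "real \<Rightarrow> real \<Rightarrow> int \<times> int
     \<Rightarrow> (cseq \<times> cseq \<times> complex \<times> cseq \<Rightarrow> cseq \<times> cseq \<times> cseq) \<Rightarrow> (cseq \<times> cseq \<times> complex \<times> cseq) set \<Rightarrow> bool" where
  "L0_continuous \<nu> \<sigma> \<zeta> L D \<longleftrightarrow>
     (\<forall>X\<in>D. \<forall>\<epsilon>>0. \<exists>\<delta>>0. \<forall>X'\<in>D.
        L0domnorm \<nu> \<sigma> \<zeta> (sub4 X' X) < \<delta> \<longrightarrow> hnorm3 \<nu> \<sigma> \<zeta> (sub3 (L X') (L X)) < \<epsilon>)"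

definition jzeta :: "int \<times> int \<Rightarrow> real" where
  "jzeta \<zeta> = 1 + zabs \<zeta>"

definition jomega2 :: "complex \<Rightarrow> int \<times> int \<Rightarrow> real" where
  "jomega2 lam \<zeta> = cmod lam + (jzeta \<zeta>)^2"

definition Mfun :: "real \<Rightarrow> complex \<Rightarrow> int \<times> int \<Rightarrow> real" where
  "Mfun s lam \<zeta> = sqrt (\<Sum>j. 1 / (real (Suc j) ^ 2 * (real (Suc j) ^ 4 + (jomega2 lam \<zeta>)^2)
                           * (real (Suc j) ^ 2 + (jzeta \<zeta>)^2) powr s))"

definition Sset :: "real \<Rightarrow> real \<Rightarrow> complex set" where
  "Sset \<delta>1 \<delta>2 = {Complex (- \<delta>2 - \<mu>1) \<mu>2 | \<mu>1 \<mu>2. \<bar>\<mu>2\<bar> \<ge> \<mu>1 / \<delta>1}"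

end

theory Submission
  imports Defs
begin

(*
  In the sine basis the operator is diagonal up to the rank-one pressure term: every
  component is multiplied by the symbol  sy k = lambda + nu |zeta|^2 + nu (k pi / a)^2,
  and for lambda in the sector S one has  |sy k| ~ k^2 + <omega>^2  uniformly.  Dividing
  by the symbol gains two derivatives and a factor <omega>^-2, which gives theta and the
  part Y2 of (u, v) driven by (f1, f2), estimates (c) and (d).

  The pressure is fixed by the vertical-mean constraint, which becomes the scalar equation
  N(f1, f2) = i p0 |zeta|^2 g  with  g = sum_k c_k^2 / sy k,  c_k the sine coefficients of 1.
  All sy k lie in one sector (they share the imaginary part of lambda), so the terms of g
  cannot cancel and |g| >= const / <omega>^2; Cauchy-Schwarz between H^sigma and H^-sigma
  bounds N by |zeta| M_sigma ||F||.  This gives (a), and the remaining part Y1 of (u, v)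
  is p0 (xi, eta) c / sy, whose norms are the sums M, giving (b).  Continuity is
  boundedness of the (diagonal plus rank-one) operator.
*)

lemma powr_le_max_powr_mult:
  fixes W Q c1 c2 s :: real
  assumes "0 < c1" "c1 * Q \<le> W" "W \<le> c2 * Q" "0 < Q"
  shows "W powr s \<le> max (c1 powr s) (c2 powr s) * Q powr s"
proof -
  define r where "r = W / Q"
  have W: "W = r * Q" using assms by (simp add: r_def)
  have r: "c1 \<le> r" "r \<le> c2"
    using assms by (simp_all add: r_def pos_le_divide_eq pos_divide_le_eq)
  then have "0 < r" using assms by linarith
  have "r powr s \<le> max (c1 powr s) (c2 powr s)"
  proof (cases "s \<ge> 0")
    case True
    then have "r powr s \<le> c2 powr s" using r \<open>0 < r\<close> by (intro powr_mono2) auto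
    then show ?thesis by linarith
  next
    case False
    then have "r powr s \<le> c1 powr s" using r assms by (intro powr_mono2') auto
    then show ?thesis by linarith
  qed
  then show ?thesis
    using W \<open>0 < r\<close> assms by (simp add: powr_mult mult_right_mono)
qed

lemma add_power2_powr_le:
  fixes x B e :: real
  assumes "x \<ge> 1" and "B \<ge> 0"
  shows "(x^2 + B) powr e \<le> (1 + B) powr \<bar>e\<bar> * x powr (2 * e)"
proof -
  have x2: "x^2 \<ge> 1" using assms by (simp add: one_le_power)
  have xx: "x powr (2 * e) = (x^2) powr e"
    using assms by (simp add: powr_powr flip: powr_numeral)
  show ?thesis
  proof (cases "e \<ge> 0")
    case True
    have "x^2 + B \<le> x^2 * (1 + B)"
      using mult_right_mono[OF x2 \<open>B \<ge> 0\<close>] by (simp add: algebra_simps)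
    then have "(x^2 + B) powr e \<le> (x^2 * (1 + B)) powr e"
      using True assms by (intro powr_mono2) auto
    also have "\<dots> = (1 + B) powr \<bar>e\<bar> * x powr (2 * e)"
      using True assms by (simp add: powr_mult xx)
    finally show ?thesis .
  next
    case False
    have "(x^2 + B) powr e \<le> (x^2) powr e"
      using False assms by (intro powr_mono2') auto
    also have "\<dots> \<le> (1 + B) powr \<bar>e\<bar> * (x^2) powr e"
      using assms ge_one_powr_ge_zero[of "1 + B" "\<bar>e\<bar>"] by (simp add: mult_le_cancel_right1)
    finally show ?thesis by (simp add: xx)
  qed
qed

lemma norm_add_power2_le:
  fixes x y :: "'a::real_normed_vector"
  shows "(norm (x + y))^2 \<le> 2 * (norm x)^2 + 2 * (norm y)^2"
proof -
  have "(norm (x + y))^2 \<le> (norm x + norm y)^2"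
    by (intro power_mono norm_triangle_ineq) simp
  also have "\<dots> \<le> 2 * (norm x)^2 + 2 * (norm y)^2"
    using zero_le_power2[of "norm x - norm y"] by (simp add: power2_eq_square algebra_simps)
  finally show ?thesis .
qed

lemma mult_add_mult_le_sqrt:
  fixes a b c d :: real
  shows "a * b + c * d \<le> sqrt (a^2 + c^2) * sqrt (b^2 + d^2)"
proof -
  have "(a * b + c * d)^2 \<le> (a^2 + c^2) * (b^2 + d^2)"
    using zero_le_power2[of "a * d - c * b"] by (simp add: power2_eq_square algebra_simps)
  then show ?thesis by (simp add: real_le_rsqrt flip: real_sqrt_mult)
qed

lemma sqrt_add_power2_le_mult:
  fixes x1 x2 y1 y2 B :: real
  assumes "0 \<le> x1" "x1 \<le> B * y1" "0 \<le> x2" "x2 \<le> B * y2" "0 \<le> B"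
  shows "sqrt (x1^2 + x2^2) \<le> B * sqrt (y1^2 + y2^2)"
proof -
  have "x1^2 + x2^2 \<le> B^2 * (y1^2 + y2^2)"
    using power_mono[OF assms(2,1), of 2] power_mono[OF assms(4,3), of 2]
    by (simp add: power_mult_distrib algebra_simps)
  then have "sqrt (x1^2 + x2^2) \<le> sqrt (B^2 * (y1^2 + y2^2))"
    by (rule real_sqrt_le_mono)
  then show ?thesis
    using assms(5) by (simp add: real_sqrt_mult)
qed

lemma suminf_mult_le_sqrt_suminf:
  fixes a b :: "nat \<Rightarrow> real"
  assumes a: "summable (\<lambda>k. (a k)^2)" and b: "summable (\<lambda>k. (b k)^2)"
  shows "summable (\<lambda>k. a k * b k)"
    and "(\<Sum>k. a k * b k) \<le> sqrt (\<Sum>k. (a k)^2) * sqrt (\<Sum>k. (b k)^2)"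
proof -
  show ab: "summable (\<lambda>k. a k * b k)"
  proof (rule summable_comparison_test'[OF summable_add[OF a b]])
    fix k
    show "norm (a k * b k) \<le> (a k)^2 + (b k)^2"
    proof -
      have "2 * (\<bar>a k\<bar> * \<bar>b k\<bar>) \<le> (a k)^2 + (b k)^2"
        using zero_le_power2[of "\<bar>a k\<bar> - \<bar>b k\<bar>"] by (simp add: power2_eq_square algebra_simps)
      moreover have "0 \<le> \<bar>a k\<bar> * \<bar>b k\<bar>" by simp
      ultimately show ?thesis unfolding real_norm_def abs_mult by linarith
    qed
  qed
  have "(\<Sum>k<n. a k * b k) \<le> sqrt (\<Sum>k. (a k)^2) * sqrt (\<Sum>k. (b k)^2)" for n
  proof -
    have "(\<Sum>k<n. a k * b k) \<le> sqrt ((\<Sum>k<n. (a k)^2) * (\<Sum>k<n. (b k)^2))"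
      using Cauchy_Schwarz_ineq_sum by (rule real_le_rsqrt)
    also have "\<dots> \<le> sqrt ((\<Sum>k. (a k)^2) * (\<Sum>k. (b k)^2))"
      using sum_le_suminf[OF a, of "{..<n}"] sum_le_suminf[OF b, of "{..<n}"]
      by (intro real_sqrt_le_mono mult_mono) (auto intro: sum_nonneg suminf_nonneg a)
    finally show ?thesis by (simp add: real_sqrt_mult)
  qed
  then show "(\<Sum>k. a k * b k) \<le> sqrt (\<Sum>k. (a k)^2) * sqrt (\<Sum>k. (b k)^2)"
    by (rule suminf_le_const[OF ab])
qed

lemma weighted_mult_power2_le:
  fixes m f :: complex
  assumes "w' = w * r^2" "0 \<le> w" "0 \<le> r" "cmod m * r \<le> B"
  shows "w' * (cmod (m * f))^2 \<le> B^2 * (w * (cmod f)^2)"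
proof -
  have "(cmod m * r)^2 \<le> B^2" using assms(3,4) by (intro power_mono) auto
  then have "w * (cmod f)^2 * (cmod m * r)^2 \<le> w * (cmod f)^2 * B^2"
    using assms(2) by (intro mult_left_mono) auto
  then show ?thesis using assms(1) by (simp add: norm_mult power_mult_distrib mult_ac)
qed

lemma summable_Suc_dominated:
  fixes t m :: "nat \<Rightarrow> real"
  assumes "\<And>k. 0 \<le> t k" "t 0 = 0" "summable m" "\<And>j. t (Suc j) \<le> K * m j"
  shows "summable t" and "suminf t \<le> K * suminf m"
proof -
  have sK: "summable (\<lambda>j. K * m j)" using assms(3) by (rule summable_mult)
  have s1: "summable (\<lambda>j. t (Suc j))"
    by (rule summable_comparison_test'[OF sK]) (use assms in auto)
  then show st: "summable t" by (simp add: summable_Suc_iff)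
  have "suminf t = (\<Sum>j. t (Suc j))" using suminf_split_head[OF st] assms(2) by simp
  also have "\<dots> \<le> K * suminf m" using suminf_le[OF assms(4) s1 sK] suminf_mult[OF assms(3)] by simp
  finally show "suminf t \<le> K * suminf m" .
qed

section \<open>Weighted sequence spaces\<close>

lemma hweight_nonneg: "0 \<le> hweight \<nu> s \<zeta> k"
  by (simp add: hweight_def)

lemma hweight_base_ge_1: "\<nu> \<ge> 0 \<Longrightarrow> 1 \<le> 1 + \<nu> * real k ^ 2 + \<nu> * zabs2 \<zeta>"
  by (simp add: zabs2_def)

lemma hweight_pos: "\<nu> \<ge> 0 \<Longrightarrow> 0 < hweight \<nu> s \<zeta> k"
  using hweight_base_ge_1[of \<nu> k \<zeta>] by (simp add: hweight_def)

lemma hweight_minus: "hweight \<nu> (- s) \<zeta> k = 1 / hweight \<nu> s \<zeta> k"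
  by (simp add: hweight_def powr_minus divide_inverse)

lemma hweight_add_2:
  "\<nu> \<ge> 0 \<Longrightarrow> hweight \<nu> (s + 2) \<zeta> k = hweight \<nu> s \<zeta> k * (1 + \<nu> * real k ^ 2 + \<nu> * zabs2 \<zeta>)^2"
  using hweight_base_ge_1[of \<nu> k \<zeta>] by (simp add: hweight_def powr_add powr_numeral)

lemma hnorm_nonneg: "f \<in> Hs \<nu> s \<zeta> \<Longrightarrow> 0 \<le> hnorm \<nu> s \<zeta> f"
  unfolding Hs_def hnorm_def by (auto intro!: suminf_nonneg simp: hweight_def)

lemma hnorm_power2:
  "f \<in> Hs \<nu> s \<zeta> \<Longrightarrow> (hnorm \<nu> s \<zeta> f)^2 = (\<Sum>k. hweight \<nu> s \<zeta> k * (cmod (f k))^2)"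
  unfolding Hs_def hnorm_def by (auto intro!: suminf_nonneg simp: hweight_def)

lemma Hs_dominated:
  assumes f: "f \<in> Hs \<nu> s \<zeta>" and "h 0 = 0" and "B \<ge> 0"
    and le: "\<And>k. hweight \<nu> s' \<zeta> k * (cmod (h k))^2 \<le> B^2 * (hweight \<nu> s \<zeta> k * (cmod (f k))^2)"
  shows "h \<in> Hs \<nu> s' \<zeta>" and "hnorm \<nu> s' \<zeta> h \<le> B * hnorm \<nu> s \<zeta> f"
proof -
  have sf: "summable (\<lambda>k. B^2 * (hweight \<nu> s \<zeta> k * (cmod (f k))^2))"
    using f by (simp add: Hs_def summable_mult)
  have sh: "summable (\<lambda>k. hweight \<nu> s' \<zeta> k * (cmod (h k))^2)"
    by (rule summable_comparison_test'[OF sf]) (use le in \<open>auto simp: hweight_nonneg\<close>)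
  then show "h \<in> Hs \<nu> s' \<zeta>" using \<open>h 0 = 0\<close> by (simp add: Hs_def)
  have "hnorm \<nu> s' \<zeta> h \<le> sqrt (\<Sum>k. B^2 * (hweight \<nu> s \<zeta> k * (cmod (f k))^2))"
    unfolding hnorm_def by (intro real_sqrt_le_mono suminf_le[OF le sh sf])
  also have "\<dots> = B * hnorm \<nu> s \<zeta> f"
    using f \<open>B \<ge> 0\<close> by (simp add: Hs_def hnorm_def suminf_mult real_sqrt_mult)
  finally show "hnorm \<nu> s' \<zeta> h \<le> B * hnorm \<nu> s \<zeta> f" .
qed

lemma Hs_add:
  assumes f: "f \<in> Hs \<nu> s \<zeta>" and g: "g \<in> Hs \<nu> s \<zeta>"
  shows "(\<lambda>k. f k + g k) \<in> Hs \<nu> s \<zeta>"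
    and "(hnorm \<nu> s \<zeta> (\<lambda>k. f k + g k))^2 \<le> 2 * (hnorm \<nu> s \<zeta> f)^2 + 2 * (hnorm \<nu> s \<zeta> g)^2"
proof -
  define wf where "wf k = hweight \<nu> s \<zeta> k * (cmod (f k))^2" for k
  define wg where "wg k = hweight \<nu> s \<zeta> k * (cmod (g k))^2" for k
  have sfg: "summable (\<lambda>k. 2 * wf k + 2 * wg k)"
    using f g by (simp add: Hs_def wf_def wg_def summable_add summable_mult)
  have le: "hweight \<nu> s \<zeta> k * (cmod (f k + g k))^2 \<le> 2 * wf k + 2 * wg k" for k
    using mult_left_mono[OF norm_add_power2_le[of "f k" "g k"] hweight_nonneg]
    by (simp add: wf_def wg_def algebra_simps)
  have s: "summable (\<lambda>k. hweight \<nu> s \<zeta> k * (cmod (f k + g k))^2)"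
    by (rule summable_comparison_test'[OF sfg]) (use le in \<open>auto simp: hweight_nonneg\<close>)
  then show "(\<lambda>k. f k + g k) \<in> Hs \<nu> s \<zeta>" using f g by (simp add: Hs_def)
  then have "(hnorm \<nu> s \<zeta> (\<lambda>k. f k + g k))^2 \<le> (\<Sum>k. 2 * wf k + 2 * wg k)"
    by (simp add: hnorm_power2 suminf_le[OF le s sfg])
  also have "\<dots> = 2 * (hnorm \<nu> s \<zeta> f)^2 + 2 * (hnorm \<nu> s \<zeta> g)^2"
  proof -
    have "summable wf" "summable wg" using f g by (simp_all add: Hs_def wf_def[abs_def] wg_def[abs_def])
    then have "(\<Sum>k. 2 * wf k + 2 * wg k) = 2 * suminf wf + 2 * suminf wg"
      using suminf_add[OF summable_mult[of wf 2] summable_mult[of wg 2]] suminf_mult[of wf 2] suminf_mult[of wg 2]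
      by simp
    then show ?thesis by (simp add: hnorm_power2 f g wf_def[abs_def] wg_def[abs_def])
  qed
  finally show "(hnorm \<nu> s \<zeta> (\<lambda>k. f k + g k))^2 \<le> 2 * (hnorm \<nu> s \<zeta> f)^2 + 2 * (hnorm \<nu> s \<zeta> g)^2" .
qed

lemma Hs_cmult:
  assumes "f \<in> Hs \<nu> s \<zeta>"
  shows "(\<lambda>k. c * f k) \<in> Hs \<nu> s \<zeta>" and "hnorm \<nu> s \<zeta> (\<lambda>k. c * f k) = cmod c * hnorm \<nu> s \<zeta> f"
proof -
  have sf: "summable (\<lambda>k. hweight \<nu> s \<zeta> k * (cmod (f k))^2)" using assms by (simp add: Hs_def)
  have e: "(\<lambda>k. hweight \<nu> s \<zeta> k * (cmod (c * f k))^2)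
      = (\<lambda>k. (cmod c)^2 * (hweight \<nu> s \<zeta> k * (cmod (f k))^2))"
    by (simp add: norm_mult power_mult_distrib mult_ac)
  show "(\<lambda>k. c * f k) \<in> Hs \<nu> s \<zeta>" using assms summable_mult[OF sf] by (simp add: Hs_def e)
  show "hnorm \<nu> s \<zeta> (\<lambda>k. c * f k) = cmod c * hnorm \<nu> s \<zeta> f"
    unfolding hnorm_def e suminf_mult[OF sf] by (simp add: real_sqrt_mult)
qed

lemma Hs_diff: "f \<in> Hs \<nu> s \<zeta> \<Longrightarrow> g \<in> Hs \<nu> s \<zeta> \<Longrightarrow> (\<lambda>k. f k - g k) \<in> Hs \<nu> s \<zeta>"
  using Hs_add(1)[OF _ Hs_cmult(1), of f \<nu> s \<zeta> g "-1"] by simp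

lemma hnorm2_le_mult:
  assumes "fst Y \<in> Hs \<nu> s \<zeta>" "snd Y \<in> Hs \<nu> s \<zeta>" "0 \<le> B"
    and "hnorm \<nu> s \<zeta> (fst Y) \<le> B * hnorm \<nu> t \<zeta> (fst F)"
    and "hnorm \<nu> s \<zeta> (snd Y) \<le> B * hnorm \<nu> t \<zeta> (snd F)"
  shows "hnorm2 \<nu> s \<zeta> Y \<le> B * hnorm2 \<nu> t \<zeta> F"
  unfolding hnorm2_def using assms by (intro sqrt_add_power2_le_mult hnorm_nonneg)

lemma L0_continuous_if_bounded:
  assumes "0 \<le> B"
    and "\<And>X X'. X \<in> D \<Longrightarrow> X' \<in> D \<Longrightarrow> hnorm3 \<nu> \<sigma> \<zeta> (sub3 (L X') (L X)) \<le> B * L0domnorm \<nu> \<sigma> \<zeta> (sub4 X' X)"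
  shows "L0_continuous \<nu> \<sigma> \<zeta> L D"
  unfolding L0_continuous_def
proof (intro ballI allI impI)
  fix X and \<epsilon> :: real assume X: "X \<in> D" and "\<epsilon> > 0"
  show "\<exists>\<delta>>0. \<forall>X'\<in>D. L0domnorm \<nu> \<sigma> \<zeta> (sub4 X' X) < \<delta> \<longrightarrow> hnorm3 \<nu> \<sigma> \<zeta> (sub3 (L X') (L X)) < \<epsilon>"
  proof (intro exI[of _ "\<epsilon> / (B + 1)"] conjI ballI impI)
    show "\<epsilon> / (B + 1) > 0" using \<open>\<epsilon> > 0\<close> assms(1) by simp
    fix X' assume "X' \<in> D" and lt: "L0domnorm \<nu> \<sigma> \<zeta> (sub4 X' X) < \<epsilon> / (B + 1)"
    have "hnorm3 \<nu> \<sigma> \<zeta> (sub3 (L X') (L X)) \<le> B * (\<epsilon> / (B + 1))"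
      using assms(2)[OF X \<open>X' \<in> D\<close>] lt assms(1) by (smt (verit) mult_left_mono)
    also have "\<dots> < \<epsilon>" using \<open>\<epsilon> > 0\<close> assms(1) by (simp add: field_simps)
    finally show "hnorm3 \<nu> \<sigma> \<zeta> (sub3 (L X') (L X)) < \<epsilon>" .
  qed
qed

section \<open>The sums \<open>M_s\<close>\<close>

definition Mterm :: "real \<Rightarrow> complex \<Rightarrow> int \<times> int \<Rightarrow> nat \<Rightarrow> real" where
  "Mterm s lam \<zeta> j = 1 / (real (Suc j) ^ 2 * (real (Suc j) ^ 4 + (jomega2 lam \<zeta>)^2)
                           * (real (Suc j) ^ 2 + (jzeta \<zeta>)^2) powr s)"

lemma Mfun_eq: "Mfun s lam \<zeta> = sqrt (suminf (Mterm s lam \<zeta>))"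
  by (simp add: Mfun_def Mterm_def[abs_def])

lemma Mterm_nonneg: "0 \<le> Mterm s lam \<zeta> j"
  by (simp add: Mterm_def)

text \<open>The sum is dominated by the p-series of exponent \<open>-2s - 6 < -1\<close>.\<close>
lemma summable_Mterm:
  assumes "s > -5/2"
  shows "summable (Mterm s lam \<zeta>)"
proof -
  define A where "A = jzeta \<zeta>^2"
  define p where "p = -2 * s - 6"
  have A0: "A \<ge> 0" by (simp add: A_def)
  have "summable (\<lambda>j. real (Suc j) powr p)"
    using summable_real_powr_iff[of p] assms summable_Suc_iff[of "\<lambda>n. real n powr p"]
    by (simp add: p_def)
  then have sp: "summable (\<lambda>j. (1 + A) powr \<bar>s\<bar> * real (Suc j) powr p)"
    by (rule summable_mult)
  show ?thesis
  proof (rule summable_comparison_test'[OF sp])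
    fix j :: nat
    define K where "K = real (Suc j)"
    have K1: "K \<ge> 1" by (simp add: K_def)
    have "K^2 + A > 0" using K1 A0 by (simp add: add_pos_nonneg)
    then have Qp: "(K^2 + A) powr s > 0" by simp
    have "K^6 \<le> K^2 * (K^4 + (jomega2 lam \<zeta>)^2)"
      by (simp add: algebra_simps flip: power_add)
    then have "Mterm s lam \<zeta> j \<le> 1 / (K^6 * (K^2 + A) powr s)"
      unfolding Mterm_def K_def[symmetric] A_def[symmetric] using K1 Qp
      by (intro divide_left_mono mult_right_mono mult_pos_pos add_pos_nonneg) auto
    also have "\<dots> = (K^2 + A) powr (- s) / K powr 6"
      using K1 by (simp add: powr_minus divide_simps powr_numeral)
    also have "\<dots> \<le> (1 + A) powr \<bar>s\<bar> * K powr (2 * (- s)) / K powr 6"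
      using add_power2_powr_le[OF K1 A0, of "- s"] K1 by (intro divide_right_mono) auto
    also have "\<dots> = (1 + A) powr \<bar>s\<bar> * K powr p"
      using K1 by (simp add: p_def powr_diff)
    finally show "norm (Mterm s lam \<zeta> j) \<le> (1 + A) powr \<bar>s\<bar> * real (Suc j) powr p"
      using Mterm_nonneg[of s lam \<zeta> j] by (simp add: K_def)
  qed
qed

lemma Mfun_nonneg: "s > -5/2 \<Longrightarrow> 0 \<le> Mfun s lam \<zeta>"
  unfolding Mfun_eq by (simp add: suminf_nonneg summable_Mterm Mterm_nonneg)

section \<open>Symbol and coefficient estimates\<close>

locale sector_params =
  fixes a \<nu> \<delta>1 \<delta>2 :: real
  assumes a_pos: "a > 0" and nu_pos: "\<nu> > 0"
    and delta2_pos: "0 < \<delta>2" and delta2_less: "\<delta>2 < \<nu> / 2" and delta1_pos: "\<delta>1 > 0"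
begin

definition "c_sector = 1 / (8 + 7 * \<delta>1)"
definition "c_diss = min (\<nu> / 4) (\<nu> * pi^2 / a^2)"
definition "c_symb = c_sector * min 1 c_diss"
definition "C_symb = 1 + \<nu> + \<nu> * pi^2 / a^2"
definition "c_weight = \<nu> / 4"
definition "C_weight = 1 + 2 * \<nu>"

lemma constants_pos:
  "c_sector > 0" "c_diss > 0" "c_symb > 0" "C_symb \<ge> 1" "c_weight > 0" "C_weight > 0"
  using a_pos nu_pos delta1_pos
  by (auto simp: c_sector_def c_diss_def c_symb_def C_symb_def c_weight_def C_weight_def)

text \<open>\<open>\<lambda> + T\<close> stays away from zero uniformly once the real shift \<open>T\<close> exceeds \<open>2 \<delta>2\<close>:
  a point of \<open>Sset\<close> far to the left of \<open>-\<delta>2\<close> has an imaginary part proportional to its distance.\<close>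
lemma sector_estimate:
  assumes "lam \<in> Sset \<delta>1 \<delta>2" "T \<ge> 2 * \<delta>2"
  shows "c_sector * (cmod lam + T) \<le> cmod (lam + complex_of_real T)"
proof -
  obtain \<mu>1 \<mu>2 where lam: "lam = Complex (-\<delta>2 - \<mu>1) \<mu>2" and "\<bar>\<mu>2\<bar> \<ge> \<mu>1 / \<delta>1"
    using assms(1) unfolding Sset_def by auto
  then have \<mu>: "\<mu>1 \<le> \<delta>1 * \<bar>\<mu>2\<bar>" using delta1_pos by (simp add: pos_divide_le_eq mult.commute)
  define z where "z = lam + complex_of_real T"
  have Re: "\<bar>T - \<delta>2 - \<mu>1\<bar> \<le> cmod z" using abs_Re_le_cmod[of z] by (simp add: z_def lam)
  have Im: "\<bar>\<mu>2\<bar> \<le> cmod z" using abs_Im_le_cmod[of z] by (simp add: z_def lam)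
  have lam_le: "cmod lam \<le> \<bar>\<delta>2 + \<mu>1\<bar> + \<bar>\<mu>2\<bar>" using cmod_le[of lam] by (simp add: lam)
  have \<delta>1z: "\<delta>1 * \<bar>\<mu>2\<bar> \<le> \<delta>1 * cmod z" "0 \<le> \<delta>1 * cmod z"
    using Im delta1_pos by (simp_all add: mult_left_mono)
  have "cmod lam + T \<le> 8 * cmod z + 7 * (\<delta>1 * cmod z)"
  proof (cases "\<mu>1 \<le> T / 4")
    case True
    have "\<bar>T - \<delta>2 - \<mu>1\<bar> = T - \<delta>2 - \<mu>1" using True assms(2) delta2_pos by simp
    moreover have "\<bar>\<delta>2 + \<mu>1\<bar> = \<delta>2 + \<mu>1 \<or> \<bar>\<delta>2 + \<mu>1\<bar> = - \<delta>2 - \<mu>1" by linarith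
    ultimately show ?thesis using Re Im lam_le True assms(2) \<delta>1z by linarith
  next
    case False
    then have "\<bar>\<delta>2 + \<mu>1\<bar> = \<delta>2 + \<mu>1" using assms(2) delta2_pos by simp
    then show ?thesis using Im lam_le \<mu> False assms(2) \<delta>1z by linarith
  qed
  then have "(cmod lam + T) / (8 + 7 * \<delta>1) \<le> cmod z"
    using delta1_pos by (simp add: pos_divide_le_eq algebra_simps)
  then show ?thesis by (simp add: c_sector_def z_def)
qed

definition "C_coef = 2 * sqrt (2 / a) * a / pi"

lemma C_coef_pos: "C_coef > 0"
  using a_pos by (simp add: C_coef_def)

lemma onecoef_0: "onecoef a 0 = 0"
  by (simp add: onecoef_def)

lemma onecoef_1: "onecoef a 1 = C_coef"
  by (simp add: onecoef_def C_coef_def)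

lemma onecoef_bound: "(onecoef a k)^2 * real k^2 \<le> C_coef^2"
proof (cases "k = 0")
  case True
  then show ?thesis by (simp add: onecoef_def)
next
  case False
  have "\<bar>1 - (-1::real)^k\<bar> \<le> 2" by (cases "even k") auto
  then have "\<bar>onecoef a k\<bar> * real k \<le> C_coef"
    using False a_pos by (simp add: onecoef_def C_coef_def abs_mult divide_right_mono)
  then have "(\<bar>onecoef a k\<bar> * real k)^2 \<le> C_coef^2" by (intro power_mono) auto
  then show ?thesis by (simp add: power_mult_distrib)
qed

definition "C_E s = max (c_weight powr s) (C_weight powr s) * C_coef^2 / c_symb^2"

lemma C_E_nonneg: "0 \<le> C_E s"
  using constants_pos by (auto simp: C_E_def le_max_iff_disj)

definition "\<epsilon>_cone = 1 / (2 * \<delta>1)"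
definition "\<kappa>_cone = 1 / (2 * (\<delta>1 + 1))"
definition "c_g = C_coef^2 * \<kappa>_cone / (2 * C_symb * (\<epsilon>_cone + 1))"

lemma cone_constants_pos: "\<epsilon>_cone > 0" "\<kappa>_cone > 0" "c_g > 0"
proof -
  show "\<epsilon>_cone > 0" "\<kappa>_cone > 0" using delta1_pos by (simp_all add: \<epsilon>_cone_def \<kappa>_cone_def)
  then show "c_g > 0" using C_coef_pos constants_pos unfolding c_g_def by (intro divide_pos_pos) auto
qed

lemma cone_estimate:
  assumes "lam \<in> Sset \<delta>1 \<delta>2" "T \<ge> 2 * \<delta>2"
  shows "\<kappa>_cone * cmod (lam + complex_of_real T)
    \<le> \<epsilon>_cone * Re (lam + complex_of_real T) + \<bar>Im (lam + complex_of_real T)\<bar>"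
proof -
  obtain \<mu>1 \<mu>2 where lam: "lam = Complex (-\<delta>2 - \<mu>1) \<mu>2" and "\<bar>\<mu>2\<bar> \<ge> \<mu>1 / \<delta>1"
    using assms(1) unfolding Sset_def by auto
  then have \<mu>: "\<mu>1 \<le> \<delta>1 * \<bar>\<mu>2\<bar>" using delta1_pos by (simp add: pos_divide_le_eq mult.commute)
  define z where "z = lam + complex_of_real T"
  have Re: "Re z = T - \<delta>2 - \<mu>1" and Im: "Im z = \<mu>2" by (simp_all add: z_def lam)
  have z_le: "cmod z \<le> \<bar>Re z\<bar> + \<bar>\<mu>2\<bar>" using cmod_le[of z] Im by simp
  have \<kappa>: "\<kappa>_cone \<le> \<epsilon>_cone" "\<kappa>_cone \<le> 1"
    using delta1_pos by (auto simp: \<kappa>_cone_def \<epsilon>_cone_def field_simps)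
  have "\<kappa>_cone * cmod z \<le> \<epsilon>_cone * Re z + \<bar>\<mu>2\<bar>"
  proof (cases "Re z \<ge> 0")
    case True
    have "\<kappa>_cone * cmod z \<le> \<kappa>_cone * Re z + \<kappa>_cone * \<bar>\<mu>2\<bar>"
      using z_le True cone_constants_pos by (simp add: distrib_left[symmetric] mult_left_mono)
    also have "\<dots> \<le> \<epsilon>_cone * Re z + \<bar>\<mu>2\<bar>"
      using \<kappa> True mult_right_mono[of \<kappa>_cone 1 "\<bar>\<mu>2\<bar>"] by (intro add_mono mult_right_mono) auto
    finally show ?thesis .
  next
    case False
    then have neg: "- Re z \<le> \<delta>1 * \<bar>\<mu>2\<bar>" using Re assms(2) \<mu> delta2_pos by linarith
    have "\<epsilon>_cone * (- Re z) \<le> \<epsilon>_cone * (\<delta>1 * \<bar>\<mu>2\<bar>)"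
      using neg cone_constants_pos by (intro mult_left_mono) auto
    also have "\<dots> = \<bar>\<mu>2\<bar> / 2" using delta1_pos by (simp add: \<epsilon>_cone_def)
    finally have "\<bar>\<mu>2\<bar> / 2 \<le> \<epsilon>_cone * Re z + \<bar>\<mu>2\<bar>" by simp
    moreover have "\<kappa>_cone * cmod z \<le> \<kappa>_cone * ((\<delta>1 + 1) * \<bar>\<mu>2\<bar>)"
      using z_le False neg cone_constants_pos by (intro mult_left_mono) (auto simp: algebra_simps)
    moreover have "\<kappa>_cone * ((\<delta>1 + 1) * \<bar>\<mu>2\<bar>) = \<bar>\<mu>2\<bar> / 2"
      using delta1_pos by (simp add: \<kappa>_cone_def field_simps)
    ultimately show ?thesis by linarith
  qed
  then show ?thesis using Im by (simp add: z_def)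
qed

definition "C_p s = sqrt (C_E (-s)) / c_g"
definition "C_res = (1 + C_weight) / c_symb"
definition "C_L0 s = C_p s * (1 + sqrt (C_E s) + sqrt (C_E (s + 2))) + C_res"

lemma C_L0_ge:
  "C_p s \<le> C_L0 s" "C_p s * (sqrt (C_E s) + sqrt (C_E (s + 2))) \<le> C_L0 s" "C_res \<le> C_L0 s"
proof -
  have "0 \<le> C_p s" "0 \<le> C_res"
    using cone_constants_pos constants_pos C_E_nonneg by (simp_all add: C_p_def C_res_def)
  moreover have "0 \<le> C_p s * (sqrt (C_E s) + sqrt (C_E (s + 2)))"
    using \<open>0 \<le> C_p s\<close> C_E_nonneg by simp
  ultimately show "C_p s \<le> C_L0 s" "C_p s * (sqrt (C_E s) + sqrt (C_E (s + 2))) \<le> C_L0 s" "C_res \<le> C_L0 s"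
    by (simp_all add: C_L0_def algebra_simps)
qed

end

locale fourier_mode = sector_params +
  fixes lam :: complex and \<zeta> :: "int \<times> int"
  assumes lam_in_S: "lam \<in> Sset \<delta>1 \<delta>2" and zeta_nonzero: "\<zeta> \<noteq> (0, 0)"
begin

lemma zabs2_ge_1: "zabs2 \<zeta> \<ge> 1"
proof -
  have sq: "1 \<le> (real_of_int r)^2" if "r \<noteq> 0" for r :: int
  proof -
    have "1 \<le> \<bar>real_of_int r\<bar>" using that by linarith
    then show ?thesis using power_mono[of 1 "\<bar>real_of_int r\<bar>" 2] by simp
  qed
  obtain x y where \<zeta>: "\<zeta> = (x, y)" by fastforce
  then have "x \<noteq> 0 \<or> y \<noteq> 0" using zeta_nonzero by auto
  then show ?thesis
    using sq[of x] sq[of y] zero_le_power2[of "real_of_int x"] zero_le_power2[of "real_of_int y"]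
    unfolding zabs2_def \<zeta> by force
qed

lemma zabs_ge_1: "zabs \<zeta> \<ge> 1" and zabs_power2: "(zabs \<zeta>)^2 = zabs2 \<zeta>"
  using zabs2_ge_1 by (simp_all add: zabs_def)

lemma jzeta_bounds: "1 \<le> (jzeta \<zeta>)^2" "zabs2 \<zeta> \<le> (jzeta \<zeta>)^2" "(jzeta \<zeta>)^2 \<le> 4 * zabs2 \<zeta>"
proof -
  have "(jzeta \<zeta>)^2 = 1 + 2 * zabs \<zeta> + (zabs \<zeta>)^2"
    by (simp add: jzeta_def power2_eq_square algebra_simps)
  moreover have "zabs \<zeta> \<le> (zabs \<zeta>)^2" using zabs_ge_1 by (simp add: power2_eq_square)
  ultimately show "1 \<le> (jzeta \<zeta>)^2" "zabs2 \<zeta> \<le> (jzeta \<zeta>)^2" "(jzeta \<zeta>)^2 \<le> 4 * zabs2 \<zeta>"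
    using zabs_ge_1 zabs_power2 by linarith+
qed

lemma jomega2_bounds: "(jzeta \<zeta>)^2 \<le> jomega2 lam \<zeta>" "1 \<le> jomega2 lam \<zeta>"
  using jzeta_bounds norm_ge_zero[of lam] unfolding jomega2_def by linarith+

abbreviation "Om \<equiv> jomega2 lam \<zeta>"
abbreviation "sy k \<equiv> symb a \<nu> lam \<zeta> k"

definition "diss k = \<nu> * zabs2 \<zeta> + \<nu> * (real k * pi / a)^2"

lemma symb_eq: "sy k = lam + complex_of_real (diss k)"
  by (simp add: symb_def omega2_def diss_def)

lemma diss_bounds:
  "2 * \<delta>2 \<le> diss k"
  "c_diss * (real k^2 + (jzeta \<zeta>)^2) \<le> diss k"
  "diss k \<le> (C_symb - 1) * (real k^2 + (jzeta \<zeta>)^2)"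
proof -
  have e: "\<nu> * (real k * pi / a)^2 = (\<nu> * pi^2 / a^2) * real k^2"
    by (simp add: power_divide power_mult_distrib)
  have k0: "0 \<le> (\<nu> * pi^2 / a^2) * real k^2" using nu_pos by simp
  have "\<nu> \<le> \<nu> * zabs2 \<zeta>" using zabs2_ge_1 nu_pos by simp
  then show "2 * \<delta>2 \<le> diss k" using delta2_less k0 e unfolding diss_def by linarith
  have "c_diss \<le> \<nu> / 4" unfolding c_diss_def by (rule min.cobounded1)
  then have "c_diss * (jzeta \<zeta>)^2 \<le> (\<nu> / 4) * (4 * zabs2 \<zeta>)"
    using jzeta_bounds nu_pos by (intro mult_mono) auto
  moreover have "c_diss * real k^2 \<le> (\<nu> * pi^2 / a^2) * real k^2"
    unfolding c_diss_def by (intro mult_right_mono) auto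
  ultimately show "c_diss * (real k^2 + (jzeta \<zeta>)^2) \<le> diss k"
    using e unfolding diss_def by (simp add: algebra_simps)
  have "\<nu> * zabs2 \<zeta> \<le> \<nu> * (real k^2 + (jzeta \<zeta>)^2)"
    using jzeta_bounds nu_pos by (intro mult_left_mono) (auto simp: add_increasing)
  moreover have "(\<nu> * pi^2 / a^2) * real k^2 \<le> (\<nu> * pi^2 / a^2) * (real k^2 + (jzeta \<zeta>)^2)"
    using nu_pos by (intro mult_left_mono) auto
  ultimately show "diss k \<le> (C_symb - 1) * (real k^2 + (jzeta \<zeta>)^2)"
    using e unfolding diss_def C_symb_def by (simp add: algebra_simps)
qed

lemma norm_symb_lower: "c_symb * (real k^2 + Om) \<le> cmod (sy k)"
proof -
  have "min 1 c_diss * (real k^2 + Om) \<le> cmod lam + diss k"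
  proof -
    have "min 1 c_diss * cmod lam \<le> cmod lam"
      by (rule mult_left_le_one_le) (use constants_pos in auto)
    moreover have "min 1 c_diss * (real k^2 + (jzeta \<zeta>)^2) \<le> c_diss * (real k^2 + (jzeta \<zeta>)^2)"
      by (intro mult_right_mono) auto
    ultimately show ?thesis using diss_bounds(2)[of k] by (simp add: jomega2_def algebra_simps)
  qed
  then have "c_sector * (min 1 c_diss * (real k^2 + Om)) \<le> c_sector * (cmod lam + diss k)"
    using constants_pos by (intro mult_left_mono) auto
  also have "\<dots> \<le> cmod (sy k)"
    using sector_estimate[OF lam_in_S diss_bounds(1)] by (simp add: symb_eq)
  finally show ?thesis by (simp add: c_symb_def mult.assoc)
qed

lemma norm_symb_upper: "cmod (sy k) \<le> C_symb * (real k^2 + Om)"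
proof -
  have "cmod (sy k) \<le> cmod lam + diss k"
    using norm_triangle_ineq[of lam "complex_of_real (diss k)"] diss_bounds(1)[of k] delta2_pos
    by (simp add: symb_eq)
  also have "\<dots> \<le> C_symb * (real k^2 + Om)"
  proof -
    have "cmod lam \<le> C_symb * cmod lam" using constants_pos by (simp add: mult_le_cancel_right1)
    moreover have "0 \<le> real k^2 + (jzeta \<zeta>)^2" by simp
    moreover have "C_symb * (real k^2 + Om) = C_symb * cmod lam + C_symb * (real k^2 + (jzeta \<zeta>)^2)"
      by (simp add: jomega2_def algebra_simps)
    moreover have "(C_symb - 1) * (real k^2 + (jzeta \<zeta>)^2)
        = C_symb * (real k^2 + (jzeta \<zeta>)^2) - (real k^2 + (jzeta \<zeta>)^2)"
      by (simp add: algebra_simps)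
    ultimately show ?thesis using diss_bounds(3)[of k] by linarith
  qed
  finally show ?thesis .
qed

lemma k2_add_Om_ge_1: "real k^2 + Om \<ge> 1"
  using jomega2_bounds by (simp add: add_increasing)

lemma norm_symb_pos: "cmod (sy k) > 0"
  using norm_symb_lower[of k] k2_add_Om_ge_1[of k] constants_pos
  by (smt (verit) mult_pos_pos)

lemma symb_nonzero: "sy k \<noteq> 0"
  using norm_symb_pos[of k] by auto

lemma norm_symb_ge_const: "c_symb \<le> cmod (sy k)"
proof -
  have "c_symb * 1 \<le> c_symb * (real k^2 + Om)"
    using k2_add_Om_ge_1[of k] constants_pos by (intro mult_left_mono) auto
  then show ?thesis using norm_symb_lower[of k] by simp
qed

definition "W k = 1 + \<nu> * real k^2 + \<nu> * zabs2 \<zeta>"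
definition "Q k = real k^2 + (jzeta \<zeta>)^2"

lemma hweight_eq: "hweight \<nu> s \<zeta> k = W k powr s"
  by (simp add: hweight_def W_def)

lemma W_ge_1: "W k \<ge> 1"
  using hweight_base_ge_1[of \<nu> k \<zeta>] nu_pos by (simp add: W_def)

lemma Q_ge_1: "1 \<le> Q k"
  using jzeta_bounds(1) zero_le_power2[of "real k"] unfolding Q_def by linarith

lemma Q_le: "Q k \<le> real k^2 + Om"
  using jomega2_bounds by (simp add: Q_def)

lemma W_bounds: "c_weight * Q k \<le> W k" "W k \<le> C_weight * Q k"
proof -
  have "\<nu> * (jzeta \<zeta>)^2 \<le> \<nu> * (4 * zabs2 \<zeta>)" "\<nu> * zabs2 \<zeta> \<le> \<nu> * (jzeta \<zeta>)^2"
    using jzeta_bounds nu_pos by (auto intro: mult_left_mono)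
  moreover have "0 \<le> \<nu> * real k^2" "1 \<le> Q k" using nu_pos Q_ge_1 by simp_all
  ultimately show "c_weight * Q k \<le> W k" "W k \<le> C_weight * Q k"
    unfolding W_def Q_def c_weight_def C_weight_def by (simp_all add: algebra_simps)
qed

lemma hweight_le_Q_powr: "hweight \<nu> s \<zeta> k \<le> max (c_weight powr s) (C_weight powr s) * Q k powr s"
  unfolding hweight_eq
proof (rule powr_le_max_powr_mult)
  show "0 < Q k" using Q_ge_1[of k] by linarith
qed (use W_bounds constants_pos in auto)

lemma hweight_add_2_eq: "hweight \<nu> (s + 2) \<zeta> k = hweight \<nu> s \<zeta> k * (W k)^2"
  using hweight_add_2[of \<nu> s \<zeta> k] nu_pos by (simp add: W_def)

lemma hweight_div_symb_le:
  "hweight \<nu> s \<zeta> k * (cmod (f / sy k))^2 \<le> (1 / (c_symb * Om))^2 * (hweight \<nu> s \<zeta> k * (cmod f)^2)"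
proof -
  have "c_symb * Om \<le> cmod (sy k)"
    using norm_symb_lower[of k] constants_pos
    by (smt (verit) mult_left_mono of_nat_0_le_iff zero_le_power2)
  then have "cmod (1 / sy k) * 1 \<le> 1 / (c_symb * Om)"
    using constants_pos jomega2_bounds by (simp add: norm_divide frac_le)
  then show ?thesis
    using weighted_mult_power2_le[where r=1 and m="1 / sy k"] by (simp add: hweight_nonneg)
qed

lemma hweight_div_symb_shift_le:
  "hweight \<nu> (s + 2) \<zeta> k * (cmod (f / sy k))^2 \<le> (C_weight / c_symb)^2 * (hweight \<nu> s \<zeta> k * (cmod f)^2)"
proof -
  have "c_symb * W k \<le> c_symb * (C_weight * (real k^2 + Om))"
    using W_bounds(2)[of k] Q_le[of k] constants_pos
    by (intro mult_left_mono) (auto intro: order_trans mult_left_mono)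
  also have "\<dots> \<le> C_weight * cmod (sy k)"
    using norm_symb_lower[of k] constants_pos by (simp add: mult.left_commute)
  finally have "cmod (1 / sy k) * W k \<le> C_weight / c_symb"
    using constants_pos norm_symb_pos[of k] by (simp add: norm_divide field_simps)
  then show ?thesis
    using weighted_mult_power2_le[OF hweight_add_2_eq hweight_nonneg, where m="1 / sy k"] W_ge_1[of k]
    by simp
qed

lemma hweight_mult_symb_le:
  "hweight \<nu> s \<zeta> k * (cmod (sy k * h))^2 \<le> (C_symb * Om / c_weight)^2 * (hweight \<nu> (s + 2) \<zeta> k * (cmod h)^2)"
proof -
  have "real k^2 + Om \<le> Om * Q k"
    using jomega2_bounds jzeta_bounds
    by (simp add: Q_def algebra_simps mult_le_cancel_left1 mult_le_cancel_right1 add_mono)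
  also have "\<dots> \<le> Om * (W k / c_weight)"
    using W_bounds(1)[of k] jomega2_bounds constants_pos by (intro mult_left_mono) (auto simp: field_simps)
  finally have "cmod (sy k) \<le> C_symb * (Om * (W k / c_weight))"
    using norm_symb_upper[of k] constants_pos by (smt (verit) mult_left_mono)
  then have "cmod (sy k) * (1 / W k) \<le> C_symb * Om / c_weight"
    using W_ge_1[of k] constants_pos by (simp add: field_simps)
  moreover have "hweight \<nu> s \<zeta> k = hweight \<nu> (s + 2) \<zeta> k * (1 / W k)^2"
    using W_ge_1[of k] by (simp add: hweight_add_2_eq power_divide)
  ultimately show ?thesis
    using weighted_mult_power2_le[where r="1 / W k"] W_ge_1[of k] hweight_nonneg by simp
qed

lemma Hs_div_symb:
  assumes f: "f \<in> Hs \<nu> s \<zeta>"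
  shows "(\<lambda>k. f k / sy k) \<in> Hs \<nu> (s + 2) \<zeta>"
    and "hnorm \<nu> (s + 2) \<zeta> (\<lambda>k. f k / sy k) \<le> C_weight / c_symb * hnorm \<nu> s \<zeta> f"
    and "(\<lambda>k. f k / sy k) \<in> Hs \<nu> s \<zeta>"
    and "hnorm \<nu> s \<zeta> (\<lambda>k. f k / sy k) \<le> 1 / (c_symb * Om) * hnorm \<nu> s \<zeta> f"
proof -
  have f0: "f 0 / sy 0 = 0" using f by (simp add: Hs_def)
  have B: "0 \<le> C_weight / c_symb" "0 \<le> 1 / (c_symb * Om)" using constants_pos jomega2_bounds by auto
  show "(\<lambda>k. f k / sy k) \<in> Hs \<nu> (s + 2) \<zeta>"
    "hnorm \<nu> (s + 2) \<zeta> (\<lambda>k. f k / sy k) \<le> C_weight / c_symb * hnorm \<nu> s \<zeta> f"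
    using Hs_dominated[OF f f0 B(1) hweight_div_symb_shift_le] by auto
  show "(\<lambda>k. f k / sy k) \<in> Hs \<nu> s \<zeta>"
    "hnorm \<nu> s \<zeta> (\<lambda>k. f k / sy k) \<le> 1 / (c_symb * Om) * hnorm \<nu> s \<zeta> f"
    using Hs_dominated[OF f f0 B(2) hweight_div_symb_le] by auto
qed

lemma Hs_mult_symb:
  assumes u: "u \<in> Hs \<nu> (s + 2) \<zeta>"
  shows "(\<lambda>k. sy k * u k) \<in> Hs \<nu> s \<zeta>"
    and "hnorm \<nu> s \<zeta> (\<lambda>k. sy k * u k) \<le> C_symb * Om / c_weight * hnorm \<nu> (s + 2) \<zeta> u"
  using Hs_dominated[OF u _ _ hweight_mult_symb_le] u constants_pos jomega2_bounds
  by (auto simp: Hs_def)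

abbreviation "cc k \<equiv> complex_of_real (onecoef a k)"

lemma coef_div_symb_term_le:
  "hweight \<nu> s \<zeta> (Suc j) * (cmod (cc (Suc j) / sy (Suc j)))^2 \<le> C_E s * Mterm (-s) lam \<zeta> j"
proof -
  define k where "k = Suc j"
  define K where "K = real k"
  define Mx where "Mx = max (c_weight powr s) (C_weight powr s)"
  have K1: "K \<ge> 1" by (simp add: K_def k_def)
  have "Q k > 0" using Q_ge_1[of k] by linarith
  then have Q: "Q k powr s > 0" by simp
  have Q_eq: "Q k = K^2 + (jzeta \<zeta>)^2" by (simp add: Q_def K_def)
  have coef: "(onecoef a k)^2 \<le> C_coef^2 / K^2"
    using onecoef_bound[of k] K1 by (simp add: K_def pos_le_divide_eq)
  have symb: "c_symb^2 * (K^4 + Om^2) \<le> (cmod (sy k))^2"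
  proof -
    have "K^4 + Om^2 \<le> (K^2 + Om)^2"
      using jomega2_bounds K1 by (simp add: power2_eq_square power4_eq_xxxx algebra_simps)
    then have "c_symb^2 * (K^4 + Om^2) \<le> (c_symb * (K^2 + Om))^2"
      unfolding power_mult_distrib by (rule mult_left_mono) simp
    also have "\<dots> \<le> (cmod (sy k))^2"
      using norm_symb_lower[of k] constants_pos jomega2_bounds K1
      by (intro power_mono) (auto simp: K_def)
    finally show ?thesis .
  qed
  have pos: "0 < c_symb^2 * (K^4 + Om^2)" using constants_pos K1 by (simp add: add_pos_nonneg)
  have "hweight \<nu> s \<zeta> k * (cmod (cc k / sy k))^2 = hweight \<nu> s \<zeta> k * ((onecoef a k)^2 / (cmod (sy k))^2)"
    by (simp add: norm_divide power_divide)
  also have "\<dots> \<le> (Mx * Q k powr s) * ((C_coef^2 / K^2) / (c_symb^2 * (K^4 + Om^2)))"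
    using hweight_le_Q_powr[of s k] coef symb pos
    by (intro mult_mono frac_le) (auto simp: hweight_nonneg Mx_def le_max_iff_disj)
  also have "\<dots> = C_E s * Mterm (-s) lam \<zeta> j"
    using K1 Q Q_eq constants_pos
    by (simp add: C_E_def Mx_def Mterm_def k_def K_def powr_minus field_simps)
  finally show ?thesis by (simp add: k_def)
qed

lemma Hs_coef_div_symb:
  assumes "s < 5/2"
  shows "(\<lambda>k. cc k / sy k) \<in> Hs \<nu> s \<zeta>"
    and "hnorm \<nu> s \<zeta> (\<lambda>k. cc k / sy k) \<le> sqrt (C_E s) * Mfun (-s) lam \<zeta>"
proof -
  have "summable (Mterm (-s) lam \<zeta>)" using assms by (intro summable_Mterm) simp
  note dom = summable_Suc_dominated[where t="\<lambda>k. hweight \<nu> s \<zeta> k * (cmod (cc k / sy k))^2",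
      OF _ _ this coef_div_symb_term_le]
  show "(\<lambda>k. cc k / sy k) \<in> Hs \<nu> s \<zeta>"
    using dom(1) by (simp add: Hs_def onecoef_0 hweight_nonneg)
  show "hnorm \<nu> s \<zeta> (\<lambda>k. cc k / sy k) \<le> sqrt (C_E s) * Mfun (-s) lam \<zeta>"
    using dom(2) unfolding hnorm_def Mfun_eq
    by (simp add: onecoef_0 hweight_nonneg real_sqrt_le_mono flip: real_sqrt_mult)
qed

lemma Hs_coef:
  assumes "s < 1/2"
  shows "(\<lambda>k. cc k) \<in> Hs \<nu> s \<zeta>"
proof -
  have "(\<lambda>k. cc k / sy k) \<in> Hs \<nu> (s + 2) \<zeta>" using assms by (intro Hs_coef_div_symb) simp
  from Hs_mult_symb(1)[OF this] show ?thesis using symb_nonzero by simp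
qed

definition "g = (\<Sum>k. cc k * cc k / sy k)"

lemma summable_g_terms: "summable (\<lambda>k. cc k * cc k / sy k)"
proof (rule summable_comparison_test'[of "\<lambda>k. C_coef^2 / c_symb * real k powr (-2)"])
  show "summable (\<lambda>k. C_coef^2 / c_symb * real k powr (-2))"
    by (rule summable_mult) (simp add: summable_real_powr_iff)
  fix k :: nat
  show "norm (cc k * cc k / sy k) \<le> C_coef^2 / c_symb * real k powr (-2)"
  proof (cases "k = 0")
    case True
    then show ?thesis by (simp add: onecoef_0)
  next
    case False
    have "(onecoef a k)^2 \<le> C_coef^2 * real k powr (-2)"
      using onecoef_bound[of k] False by (simp add: powr_minus powr_realpow divide_simps)
    moreover have "norm (cc k * cc k / sy k) = (onecoef a k)^2 / cmod (sy k)"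
      by (simp add: norm_mult norm_divide power2_eq_square)
    ultimately show ?thesis
      using norm_symb_ge_const[of k] constants_pos
      by (simp add: frac_le)
  qed
qed

text \<open>All symbols lie in one sector (\<open>Im (sy k) = Im lam\<close>), so the terms of \<open>g\<close> cannot cancel:
  rotating by \<open>rot\<close> makes all real parts nonnegative, and the first term alone gives the bound.\<close>
definition "rot = Complex \<epsilon>_cone (sgn (Im lam))"

lemma Re_rot_g_term_ge: "(onecoef a k)^2 * (\<kappa>_cone / cmod (sy k)) \<le> Re (rot * (cc k * cc k / sy k))"
proof -
  have "\<kappa>_cone * cmod (sy k) \<le> \<epsilon>_cone * Re (sy k) + sgn (Im lam) * Im (sy k)"
    using cone_estimate[OF lam_in_S diss_bounds(1)[of k]]
    by (simp add: symb_eq abs_sgn mult.commute)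
  then have "\<kappa>_cone / cmod (sy k) \<le> (\<epsilon>_cone * Re (sy k) + sgn (Im lam) * Im (sy k)) / (cmod (sy k))^2"
    using norm_symb_pos[of k] by (simp add: divide_simps power2_eq_square)
  then have "(onecoef a k)^2 * (\<kappa>_cone / cmod (sy k))
      \<le> (onecoef a k)^2 * ((\<epsilon>_cone * Re (sy k) + sgn (Im lam) * Im (sy k)) / (cmod (sy k))^2)"
    by (rule mult_left_mono) simp
  moreover have "Re (rot * (cc k * cc k / sy k))
      = (onecoef a k)^2 * ((\<epsilon>_cone * Re (sy k) + sgn (Im lam) * Im (sy k)) / (cmod (sy k))^2)"
    by (simp add: Re_divide' rot_def power2_eq_square algebra_simps)
  ultimately show ?thesis by linarith
qed

lemma norm_g_ge: "c_g / Om \<le> cmod g"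
proof -
  have rot: "cmod rot \<le> \<epsilon>_cone + 1"
    using cmod_le[of rot] cone_constants_pos by (simp add: rot_def sgn_if split: if_splits)
  have nonneg: "0 \<le> Re (rot * (cc k * cc k / sy k))" for k
    using Re_rot_g_term_ge[of k] norm_symb_pos[of k] cone_constants_pos
    by (smt (verit) divide_nonneg_pos mult_nonneg_nonneg zero_le_power2)
  have sr: "summable (\<lambda>k. rot * (cc k * cc k / sy k))" by (rule summable_mult[OF summable_g_terms])
  have "C_coef^2 * (\<kappa>_cone / (C_symb * (2 * Om))) \<le> C_coef^2 * (\<kappa>_cone / cmod (sy 1))"
  proof -
    have "cmod (sy 1) \<le> C_symb * (2 * Om)"
      using norm_symb_upper[of 1] jomega2_bounds constants_pos by (smt (verit) mult_left_mono of_nat_1 power_one)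
    then show ?thesis using norm_symb_pos[of 1] cone_constants_pos jomega2_bounds constants_pos
      by (intro mult_left_mono divide_left_mono) auto
  qed
  also have "\<dots> \<le> Re (rot * (cc 1 * cc 1 / sy 1))" using Re_rot_g_term_ge[of 1] onecoef_1 by simp
  also have "\<dots> \<le> (\<Sum>k. Re (rot * (cc k * cc k / sy k)))"
    using sum_le_suminf[OF summable_Re[OF sr], of "{1}"] nonneg by simp
  also have "\<dots> = Re (rot * g)"
    using suminf_mult[OF summable_g_terms, of rot] Re_suminf[OF sr] by (simp add: g_def)
  also have "\<dots> \<le> (\<epsilon>_cone + 1) * cmod g"
    using complex_Re_le_cmod[of "rot * g"] mult_right_mono[OF rot, of "cmod g"] by (simp add: norm_mult)
  finally have "C_coef^2 * (\<kappa>_cone / (C_symb * (2 * Om))) / (\<epsilon>_cone + 1) \<le> cmod g"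
    using cone_constants_pos by (subst pos_divide_le_eq) (auto simp: mult.commute)
  moreover have "C_coef^2 * (\<kappa>_cone / (C_symb * (2 * Om))) / (\<epsilon>_cone + 1) = c_g / Om"
    by (simp add: c_g_def field_simps)
  ultimately show ?thesis by simp
qed

lemma g_nonzero: "g \<noteq> 0"
  using norm_g_ge cone_constants_pos jomega2_bounds by (smt (verit) divide_pos_pos norm_zero)

end

section \<open>The operator\<close>

context fourier_mode
begin

abbreviation "\<xi> \<equiv> complex_of_int (fst \<zeta>)"
abbreviation "\<eta> \<equiv> complex_of_int (snd \<zeta>)"

lemma norm_zeta_combination_le:
  "cmod (\<xi> * x + \<eta> * y) \<le> zabs \<zeta> * sqrt ((cmod x)^2 + (cmod y)^2)"
proof -
  have "cmod (\<xi> * x + \<eta> * y) \<le> \<bar>real_of_int (fst \<zeta>)\<bar> * cmod x + \<bar>real_of_int (snd \<zeta>)\<bar> * cmod y"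
    using norm_triangle_ineq[of "\<xi> * x" "\<eta> * y"] by (simp add: norm_mult)
  also have "\<dots> \<le> zabs \<zeta> * sqrt ((cmod x)^2 + (cmod y)^2)"
    using mult_add_mult_le_sqrt[of "\<bar>real_of_int (fst \<zeta>)\<bar>" "cmod x" "\<bar>real_of_int (snd \<zeta>)\<bar>" "cmod y"]
    by (simp add: zabs_def zabs2_def)
  finally show ?thesis .
qed

definition "N f1 f2 = (\<Sum>k. cc k * (\<xi> * f1 k + \<eta> * f2 k) / sy k)"

lemma norm_N_term_le:
  "cmod (cc k * (\<xi> * x + \<eta> * y) / sy k)
    \<le> zabs \<zeta> * ((sqrt (hweight \<nu> (-s) \<zeta> k) * cmod (cc k / sy k))
                  * (sqrt (hweight \<nu> s \<zeta> k) * sqrt ((cmod x)^2 + (cmod y)^2)))"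
proof -
  have w: "sqrt (hweight \<nu> (-s) \<zeta> k) * sqrt (hweight \<nu> s \<zeta> k) = 1"
    using hweight_pos[of \<nu> s \<zeta> k] nu_pos by (simp add: hweight_minus flip: real_sqrt_mult)
  have "cmod (cc k * (\<xi> * x + \<eta> * y) / sy k) = cmod (cc k / sy k) * cmod (\<xi> * x + \<eta> * y)"
    by (simp add: norm_mult norm_divide)
  also have "\<dots> \<le> cmod (cc k / sy k) * (zabs \<zeta> * sqrt ((cmod x)^2 + (cmod y)^2))"
    by (rule mult_left_mono[OF norm_zeta_combination_le]) simp
  also have "\<dots> = zabs \<zeta> * ((sqrt (hweight \<nu> (-s) \<zeta> k) * sqrt (hweight \<nu> s \<zeta> k))
      * (cmod (cc k / sy k) * sqrt ((cmod x)^2 + (cmod y)^2)))"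
    by (simp only: w mult_1 mult.left_commute)
  finally show ?thesis by (simp only: mult_ac)
qed

text \<open>Cauchy-Schwarz in the duality of \<open>H^s\<close> and \<open>H^-s\<close>, with \<open>c / sy \<in> H^-s\<close>.\<close>
lemma N_bound:
  assumes "s > -5/2" and f1: "f1 \<in> Hs \<nu> s \<zeta>" and f2: "f2 \<in> Hs \<nu> s \<zeta>"
  shows "summable (\<lambda>k. cc k * (\<xi> * f1 k + \<eta> * f2 k) / sy k)"
    and "cmod (N f1 f2) \<le> zabs \<zeta> * hnorm2 \<nu> s \<zeta> (f1, f2) * (sqrt (C_E (-s)) * Mfun s lam \<zeta>)"
proof -
  define t where "t k = cc k * (\<xi> * f1 k + \<eta> * f2 k) / sy k" for k
  define x where "x k = sqrt (hweight \<nu> (-s) \<zeta> k) * cmod (cc k / sy k)" for k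
  define y where "y k = sqrt (hweight \<nu> s \<zeta> k) * sqrt ((cmod (f1 k))^2 + (cmod (f2 k))^2)" for k
  have cs: "(\<lambda>k. cc k / sy k) \<in> Hs \<nu> (-s) \<zeta>"
    "hnorm \<nu> (-s) \<zeta> (\<lambda>k. cc k / sy k) \<le> sqrt (C_E (-s)) * Mfun s lam \<zeta>"
    using Hs_coef_div_symb[of "-s"] assms(1) by simp_all
  have x2: "(x k)^2 = hweight \<nu> (-s) \<zeta> k * (cmod (cc k / sy k))^2" for k
    by (simp add: x_def power_mult_distrib hweight_nonneg)
  have y2: "(y k)^2 = hweight \<nu> s \<zeta> k * (cmod (f1 k))^2 + hweight \<nu> s \<zeta> k * (cmod (f2 k))^2" for k
    by (simp add: y_def power_mult_distrib hweight_nonneg algebra_simps)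
  have sx: "summable (\<lambda>k. (x k)^2)" using cs(1) by (simp add: x2 Hs_def)
  have sy: "summable (\<lambda>k. (y k)^2)" using f1 f2 by (simp add: y2 Hs_def summable_add)
  have t_le: "norm (t k) \<le> zabs \<zeta> * (x k * y k)" for k
    using norm_N_term_le[of k "f1 k" "f2 k" s] by (simp add: t_def x_def y_def)
  note cs_xy = suminf_mult_le_sqrt_suminf[OF sx sy]
  have st: "summable (\<lambda>k. norm (t k))"
    by (rule summable_comparison_test'[OF summable_mult[OF cs_xy(1)]]) (use t_le in auto)
  then show "summable (\<lambda>k. cc k * (\<xi> * f1 k + \<eta> * f2 k) / sy k)"
    unfolding t_def[abs_def] by (rule summable_norm_cancel)
  have xy: "sqrt (\<Sum>k. (x k)^2) * sqrt (\<Sum>k. (y k)^2)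
      \<le> sqrt (C_E (-s)) * Mfun s lam \<zeta> * hnorm2 \<nu> s \<zeta> (f1, f2)"
  proof -
    have "sqrt (\<Sum>k. (y k)^2) = hnorm2 \<nu> s \<zeta> (f1, f2)"
      using f1 f2 unfolding hnorm2_def y2 by (simp add: hnorm_power2 suminf_add Hs_def)
    moreover have "sqrt (\<Sum>k. (x k)^2) \<le> sqrt (C_E (-s)) * Mfun s lam \<zeta>"
      using cs unfolding x2 hnorm_def by simp
    ultimately show ?thesis by (simp add: mult_right_mono hnorm2_def)
  qed
  have "cmod (N f1 f2) \<le> (\<Sum>k. norm (t k))"
    using summable_norm[OF st] by (simp add: N_def t_def)
  also have "\<dots> \<le> zabs \<zeta> * (\<Sum>k. x k * y k)"
    using suminf_le[OF t_le st summable_mult[OF cs_xy(1)]] suminf_mult[OF cs_xy(1)] by simp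
  also have "\<dots> \<le> zabs \<zeta> * (sqrt (C_E (-s)) * Mfun s lam \<zeta> * hnorm2 \<nu> s \<zeta> (f1, f2))"
    using order_trans[OF cs_xy(2) xy] zabs_ge_1 by (intro mult_left_mono) auto
  finally show "cmod (N f1 f2) \<le> zabs \<zeta> * hnorm2 \<nu> s \<zeta> (f1, f2) * (sqrt (C_E (-s)) * Mfun s lam \<zeta>)"
    by (simp add: mult_ac)
qed

lemma L0_component_bound:
  assumes "s < 1/2" and u: "u \<in> Hs \<nu> (s + 2) \<zeta>" and "cmod \<alpha> \<le> zabs \<zeta>"
  shows "(\<lambda>k. sy k * u k + \<alpha> * p * cc k) \<in> Hs \<nu> s \<zeta>"
    and "(hnorm \<nu> s \<zeta> (\<lambda>k. sy k * u k + \<alpha> * p * cc k))^2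
      \<le> 2 * (C_symb * Om / c_weight)^2 * (hnorm \<nu> (s + 2) \<zeta> u)^2
        + 2 * zabs2 \<zeta> * (hnorm \<nu> s \<zeta> (\<lambda>k. cc k))^2 * (cmod p)^2"
proof -
  note su = Hs_mult_symb[OF u] and sc = Hs_cmult[OF Hs_coef[OF assms(1)], of "\<alpha> * p"]
  show "(\<lambda>k. sy k * u k + \<alpha> * p * cc k) \<in> Hs \<nu> s \<zeta>"
    using Hs_add(1)[OF su(1) sc(1)] by (simp add: mult.assoc)
  have "(hnorm \<nu> s \<zeta> (\<lambda>k. sy k * u k))^2 \<le> (C_symb * Om / c_weight * hnorm \<nu> (s + 2) \<zeta> u)^2"
    using su hnorm_nonneg by (intro power_mono) auto
  then have A: "(hnorm \<nu> s \<zeta> (\<lambda>k. sy k * u k))^2 \<le> (C_symb * Om / c_weight)^2 * (hnorm \<nu> (s + 2) \<zeta> u)^2"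
    by (simp only: power_mult_distrib)
  have "(cmod \<alpha>)^2 \<le> zabs2 \<zeta>" using power_mono[OF assms(3), of 2] zabs_power2 by simp
  then have "(cmod \<alpha>)^2 * ((hnorm \<nu> s \<zeta> (\<lambda>k. cc k))^2 * (cmod p)^2)
      \<le> zabs2 \<zeta> * ((hnorm \<nu> s \<zeta> (\<lambda>k. cc k))^2 * (cmod p)^2)"
    by (rule mult_right_mono) simp
  then have C: "(hnorm \<nu> s \<zeta> (\<lambda>k. \<alpha> * p * cc k))^2 \<le> zabs2 \<zeta> * (hnorm \<nu> s \<zeta> (\<lambda>k. cc k))^2 * (cmod p)^2"
    using sc(2) by (simp add: norm_mult power_mult_distrib mult_ac)
  show "(hnorm \<nu> s \<zeta> (\<lambda>k. sy k * u k + \<alpha> * p * cc k))^2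
      \<le> 2 * (C_symb * Om / c_weight)^2 * (hnorm \<nu> (s + 2) \<zeta> u)^2
        + 2 * zabs2 \<zeta> * (hnorm \<nu> s \<zeta> (\<lambda>k. cc k))^2 * (cmod p)^2"
    using Hs_add(2)[OF su(1) sc(1)] A C by linarith
qed

lemma L0_bounded:
  assumes "s < 1/2" and u: "u \<in> Hs \<nu> (s + 2) \<zeta>" and v: "v \<in> Hs \<nu> (s + 2) \<zeta>" and \<theta>: "\<theta> \<in> Hs \<nu> (s + 2) \<zeta>"
  defines "B \<equiv> 2 * (C_symb * Om / c_weight)^2 + 6 * zabs2 \<zeta> * (hnorm \<nu> s \<zeta> (\<lambda>k. cc k))^2"
  shows "L0 a \<nu> lam \<zeta> (u, v, p, \<theta>) \<in> L0cod \<nu> s \<zeta>"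
    and "hnorm3 \<nu> s \<zeta> (L0 a \<nu> lam \<zeta> (u, v, p, \<theta>)) \<le> sqrt B * L0domnorm \<nu> s \<zeta> (u, v, p, \<theta>)"
proof -
  have \<alpha>: "cmod (\<i> * \<xi>) \<le> zabs \<zeta>" "cmod (\<i> * \<eta>) \<le> zabs \<zeta>" "cmod (0::complex) \<le> zabs \<zeta>"
    using zabs_ge_1 by (auto simp: norm_mult zabs_def zabs2_def intro: real_le_rsqrt)
  note c1 = L0_component_bound[OF assms(1) u \<alpha>(1), of p]
    and c2 = L0_component_bound[OF assms(1) v \<alpha>(2), of p]
    and c3 = L0_component_bound[OF assms(1) \<theta> \<alpha>(3), of p]
  have L: "L0 a \<nu> lam \<zeta> (u, v, p, \<theta>) = ((\<lambda>k. sy k * u k + \<i> * \<xi> * p * cc k),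
      (\<lambda>k. sy k * v k + \<i> * \<eta> * p * cc k), (\<lambda>k. sy k * \<theta> k + 0 * p * cc k))"
    by (simp add: L0_def)
  show "L0 a \<nu> lam \<zeta> (u, v, p, \<theta>) \<in> L0cod \<nu> s \<zeta>"
    unfolding L L0cod_def using c1(1) c2(1) c3(1) by simp
  define Bm where "Bm = (C_symb * Om / c_weight)^2"
  define K where "K = zabs2 \<zeta> * (hnorm \<nu> s \<zeta> (\<lambda>k. cc k))^2"
  define U where "U = (hnorm \<nu> (s + 2) \<zeta> u)^2 + (hnorm \<nu> (s + 2) \<zeta> v)^2 + (hnorm \<nu> (s + 2) \<zeta> \<theta>)^2"
  have nonneg: "0 \<le> Bm * (cmod p)^2" "0 \<le> K * U"
    using zabs2_ge_1 by (simp_all add: Bm_def K_def U_def)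
  have "(hnorm3 \<nu> s \<zeta> (L0 a \<nu> lam \<zeta> (u, v, p, \<theta>)))^2
      = (hnorm \<nu> s \<zeta> (\<lambda>k. sy k * u k + \<i> * \<xi> * p * cc k))^2
      + (hnorm \<nu> s \<zeta> (\<lambda>k. sy k * v k + \<i> * \<eta> * p * cc k))^2
      + (hnorm \<nu> s \<zeta> (\<lambda>k. sy k * \<theta> k + 0 * p * cc k))^2"
    unfolding hnorm3_def L by (simp add: add_nonneg_nonneg)
  also have "\<dots> \<le> 2 * Bm * U + 6 * K * (cmod p)^2"
    using c1(2) c2(2) c3(2) unfolding Bm_def K_def U_def by (simp add: algebra_simps)
  also have "\<dots> \<le> B * (U + (cmod p)^2)"
  proof -
    have "B * (U + (cmod p)^2) = 2 * Bm * U + 6 * K * (cmod p)^2 + 2 * (Bm * (cmod p)^2) + 6 * (K * U)"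
      by (simp add: B_def Bm_def K_def algebra_simps)
    then show ?thesis using nonneg by linarith
  qed
  also have "U + (cmod p)^2 = (L0domnorm \<nu> s \<zeta> (u, v, p, \<theta>))^2"
    by (simp add: L0domnorm_def U_def add_nonneg_nonneg)
  finally have "(hnorm3 \<nu> s \<zeta> (L0 a \<nu> lam \<zeta> (u, v, p, \<theta>)))^2 \<le> B * (L0domnorm \<nu> s \<zeta> (u, v, p, \<theta>))^2" .
  then show "hnorm3 \<nu> s \<zeta> (L0 a \<nu> lam \<zeta> (u, v, p, \<theta>)) \<le> sqrt B * L0domnorm \<nu> s \<zeta> (u, v, p, \<theta>)"
    by (simp add: hnorm3_def L0domnorm_def real_le_rsqrt real_sqrt_mult flip: real_sqrt_mult)
qed

lemma L0_diff: "sub3 (L0 a \<nu> lam \<zeta> X') (L0 a \<nu> lam \<zeta> X) = L0 a \<nu> lam \<zeta> (sub4 X' X)"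
  by (cases X; cases X') (simp add: sub3_def sub4_def L0_def algebra_simps)

lemma L0_continuous_on_dom:
  assumes "s < 1/2"
  shows "L0_continuous \<nu> s \<zeta> (L0 a \<nu> lam \<zeta>) (L0dom a \<nu> s \<zeta>)"
proof (rule L0_continuous_if_bounded)
  define B where "B = 2 * (C_symb * Om / c_weight)^2 + 6 * zabs2 \<zeta> * (hnorm \<nu> s \<zeta> (\<lambda>k. cc k))^2"
  show "0 \<le> sqrt B" using zabs2_ge_1 by (simp add: B_def)
  fix X X' assume "X \<in> L0dom a \<nu> s \<zeta>" "X' \<in> L0dom a \<nu> s \<zeta>"
  then obtain u v p \<theta> u' v' p' \<theta>' where X: "X = (u, v, p, \<theta>)" "X' = (u', v', p', \<theta>')"
    and "u \<in> Hs \<nu> (s + 2) \<zeta>" "v \<in> Hs \<nu> (s + 2) \<zeta>" "\<theta> \<in> Hs \<nu> (s + 2) \<zeta>"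
    and "u' \<in> Hs \<nu> (s + 2) \<zeta>" "v' \<in> Hs \<nu> (s + 2) \<zeta>" "\<theta>' \<in> Hs \<nu> (s + 2) \<zeta>"
    by (auto simp: L0dom_def)
  then show "hnorm3 \<nu> s \<zeta> (sub3 (L0 a \<nu> lam \<zeta> X') (L0 a \<nu> lam \<zeta> X)) \<le> sqrt B * L0domnorm \<nu> s \<zeta> (sub4 X' X)"
    unfolding L0_diff B_def using assms
    by (simp add: sub4_def L0_bounded(2) Hs_diff)
qed

definition "L0_inverse F = (case F of (f1, f2, f3) \<Rightarrow>
    let p = N f1 f2 / (\<i> * complex_of_real (zabs2 \<zeta>) * g)
    in (\<lambda>k. (f1 k - \<i> * \<xi> * p * cc k) / sy k, \<lambda>k. (f2 k - \<i> * \<eta> * p * cc k) / sy k, p, \<lambda>k. f3 k / sy k))"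

text \<open>Eliminating \<open>u, v\<close> turns the divergence constraint into the scalar equation
  \<open>N f1 f2 = i p |\<zeta>|^2 g\<close> for the pressure, solvable because \<open>g \<noteq> 0\<close>.\<close>
lemma divfree_solution_iff:
  assumes "s > -5/2" and f1: "f1 \<in> Hs \<nu> s \<zeta>" and f2: "f2 \<in> Hs \<nu> s \<zeta>"
  shows "divfree a \<zeta> (\<lambda>k. (f1 k - \<i> * \<xi> * p * cc k) / sy k) (\<lambda>k. (f2 k - \<i> * \<eta> * p * cc k) / sy k)
    \<longleftrightarrow> N f1 f2 = \<i> * p * complex_of_real (zabs2 \<zeta>) * g"
proof -
  have z2: "complex_of_real (zabs2 \<zeta>) = \<xi> * \<xi> + \<eta> * \<eta>"
    by (simp add: zabs2_def power2_eq_square)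
  have "cc k * (\<xi> * ((f1 k - \<i> * \<xi> * p * cc k) / sy k) + \<eta> * ((f2 k - \<i> * \<eta> * p * cc k) / sy k))
      = cc k * (\<xi> * f1 k + \<eta> * f2 k) / sy k - \<i> * p * complex_of_real (zabs2 \<zeta>) * (cc k * cc k / sy k)"
    for k unfolding z2 divide_inverse by (simp add: algebra_simps)
  then have "(\<Sum>k. cc k * (\<xi> * ((f1 k - \<i> * \<xi> * p * cc k) / sy k) + \<eta> * ((f2 k - \<i> * \<eta> * p * cc k) / sy k)))
      = N f1 f2 - \<i> * p * complex_of_real (zabs2 \<zeta>) * g"
    using suminf_diff[OF N_bound(1)[OF assms] summable_mult[OF summable_g_terms]]
      suminf_mult[OF summable_g_terms]
    by (simp add: N_def g_def)
  then show ?thesis by (simp add: divfree_def)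
qed

lemma L0_inverse_in_dom:
  assumes "-5/2 < s" "s < 1/2" and "F \<in> L0cod \<nu> s \<zeta>"
  shows "L0_inverse F \<in> L0dom a \<nu> s \<zeta>"
proof -
  obtain f1 f2 f3 where F: "F = (f1, f2, f3)" and f: "f1 \<in> Hs \<nu> s \<zeta>" "f2 \<in> Hs \<nu> s \<zeta>" "f3 \<in> Hs \<nu> s \<zeta>"
    using assms(3) by (auto simp: L0cod_def)
  define p where "p = N f1 f2 / (\<i> * complex_of_real (zabs2 \<zeta>) * g)"
  have "N f1 f2 = \<i> * p * complex_of_real (zabs2 \<zeta>) * g"
    using g_nonzero zabs2_ge_1 by (simp add: p_def)
  then have div: "divfree a \<zeta> (\<lambda>k. (f1 k - \<i> * \<xi> * p * cc k) / sy k) (\<lambda>k. (f2 k - \<i> * \<eta> * p * cc k) / sy k)"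
    using divfree_solution_iff[OF assms(1) f(1,2)] by simp
  have mem: "(\<lambda>k. (f k - \<alpha> * cc k) / sy k) \<in> Hs \<nu> (s + 2) \<zeta>" if "f \<in> Hs \<nu> s \<zeta>" for f \<alpha>
    using Hs_div_symb(1)[OF Hs_diff[OF that Hs_cmult(1)[OF Hs_coef[OF assms(2)]]], of \<alpha>]
    by (simp add: mult.assoc)
  have "(\<lambda>k. (f1 k - \<i> * \<xi> * p * cc k) / sy k) \<in> Hs \<nu> (s + 2) \<zeta>"
    "(\<lambda>k. (f2 k - \<i> * \<eta> * p * cc k) / sy k) \<in> Hs \<nu> (s + 2) \<zeta>"
    using mem f by blast+
  moreover have "L0_inverse F = ((\<lambda>k. (f1 k - \<i> * \<xi> * p * cc k) / sy k),
      (\<lambda>k. (f2 k - \<i> * \<eta> * p * cc k) / sy k), p, (\<lambda>k. f3 k / sy k))"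
    by (simp add: F L0_inverse_def p_def Let_def)
  ultimately show ?thesis
    using div Hs_div_symb(1)[OF f(3)] by (simp add: L0dom_def)
qed

lemma L0_L0_inverse: "L0 a \<nu> lam \<zeta> (L0_inverse F) = F"
  using symb_nonzero by (cases F) (simp add: L0_inverse_def L0_def Let_def)

lemma L0_inverse_L0:
  assumes "-5/2 < s" "s < 1/2" and X: "X \<in> L0dom a \<nu> s \<zeta>"
  shows "L0_inverse (L0 a \<nu> lam \<zeta> X) = X"
proof -
  obtain u v p \<theta> where X_eq: "X = (u, v, p, \<theta>)" by (cases X)
  obtain f1 f2 f3 where F: "L0 a \<nu> lam \<zeta> X = (f1, f2, f3)" by (cases "L0 a \<nu> lam \<zeta> X")
  have mem: "u \<in> Hs \<nu> (s + 2) \<zeta>" "v \<in> Hs \<nu> (s + 2) \<zeta>" "\<theta> \<in> Hs \<nu> (s + 2) \<zeta>" and div: "divfree a \<zeta> u v"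
    using X by (auto simp: X_eq L0dom_def)
  have "(f1, f2, f3) \<in> L0cod \<nu> s \<zeta>" using L0_bounded(1)[OF assms(2) mem, of p] F by (simp add: X_eq)
  then have f: "f1 \<in> Hs \<nu> s \<zeta>" "f2 \<in> Hs \<nu> s \<zeta>" by (auto simp: L0cod_def)
  have uv: "u = (\<lambda>k. (f1 k - \<i> * \<xi> * p * cc k) / sy k)" "v = (\<lambda>k. (f2 k - \<i> * \<eta> * p * cc k) / sy k)"
    and \<theta>: "\<theta> = (\<lambda>k. f3 k / sy k)"
    using F symb_nonzero by (auto simp: X_eq L0_def field_simps)
  have "N f1 f2 = \<i> * p * complex_of_real (zabs2 \<zeta>) * g"
    using div divfree_solution_iff[OF assms(1) f] by (simp add: uv)
  then have p: "N f1 f2 / (\<i> * complex_of_real (zabs2 \<zeta>) * g) = p"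
    using g_nonzero zabs2_ge_1 by (simp add: field_simps)
  have "L0_inverse (f1, f2, f3) = (u, v, p, \<theta>)"
    by (simp only: L0_inverse_def Let_def case_prod_conv p uv \<theta>)
  then show ?thesis using F by (simp add: X_eq)
qed

lemma L0_bij:
  assumes "-5/2 < s" "s < 1/2"
  shows "bij_betw (L0 a \<nu> lam \<zeta>) (L0dom a \<nu> s \<zeta>) (L0cod \<nu> s \<zeta>)"
proof (rule bij_betw_byWitness[where f' = L0_inverse])
  show "L0 a \<nu> lam \<zeta> ` L0dom a \<nu> s \<zeta> \<subseteq> L0cod \<nu> s \<zeta>"
    using L0_bounded(1)[OF assms(2)] by (auto simp: L0dom_def)
qed (use assms L0_inverse_L0 L0_L0_inverse L0_inverse_in_dom in auto)

lemma L0_solution: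
  assumes "-5/2 < s" "s < 1/2"
    and X: "(u, v, p0, \<theta>) \<in> L0dom a \<nu> s \<zeta>" and L: "L0 a \<nu> lam \<zeta> (u, v, p0, \<theta>) = (f1, f2, f3)"
  shows "f1 \<in> Hs \<nu> s \<zeta>" "f2 \<in> Hs \<nu> s \<zeta>" "f3 \<in> Hs \<nu> s \<zeta>"
    and "N f1 f2 = \<i> * p0 * complex_of_real (zabs2 \<zeta>) * g"
    and "u = (\<lambda>k. (f1 k - \<i> * \<xi> * p0 * cc k) / sy k)" "v = (\<lambda>k. (f2 k - \<i> * \<eta> * p0 * cc k) / sy k)"
    and "\<theta> = (\<lambda>k. f3 k / sy k)"
proof -
  have "(f1, f2, f3) \<in> L0cod \<nu> s \<zeta>"
    using L0_bij[OF assms(1,2)] X L by (metis bij_betw_apply)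
  then show "f1 \<in> Hs \<nu> s \<zeta>" "f2 \<in> Hs \<nu> s \<zeta>" "f3 \<in> Hs \<nu> s \<zeta>" by (auto simp: L0cod_def)
  have inv: "L0_inverse (f1, f2, f3) = (u, v, p0, \<theta>)" using L0_inverse_L0[OF assms(1,2) X] L by simp
  then have p0: "N f1 f2 / (\<i> * complex_of_real (zabs2 \<zeta>) * g) = p0"
    by (simp add: L0_inverse_def Let_def)
  then show "N f1 f2 = \<i> * p0 * complex_of_real (zabs2 \<zeta>) * g"
    using g_nonzero zabs2_ge_1 by (auto simp: field_simps)
  show "u = (\<lambda>k. (f1 k - \<i> * \<xi> * p0 * cc k) / sy k)" "v = (\<lambda>k. (f2 k - \<i> * \<eta> * p0 * cc k) / sy k)"
    "\<theta> = (\<lambda>k. f3 k / sy k)"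
    using inv unfolding L0_inverse_def Let_def case_prod_conv p0 by auto
qed

lemma pressure_estimate:
  assumes "s > -5/2" and f: "f1 \<in> Hs \<nu> s \<zeta>" "f2 \<in> Hs \<nu> s \<zeta>"
    and p: "N f1 f2 = \<i> * p * complex_of_real (zabs2 \<zeta>) * g"
  shows "zabs \<zeta> * cmod p \<le> C_p s * Om * Mfun s lam \<zeta> * hnorm2 \<nu> s \<zeta> (f1, f2)"
proof -
  define H where "H = hnorm2 \<nu> s \<zeta> (f1, f2) * (sqrt (C_E (-s)) * Mfun s lam \<zeta>)"
  have H: "0 \<le> H" using Mfun_nonneg[OF assms(1)] C_E_nonneg by (simp add: H_def hnorm2_def)
  have "zabs \<zeta> * (zabs \<zeta> * cmod p * cmod g) = cmod (N f1 f2)"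
    using zabs_power2 zabs2_ge_1 by (simp add: p norm_mult power2_eq_square mult_ac)
  also have "\<dots> \<le> zabs \<zeta> * H" using N_bound(2)[OF assms(1) f] by (simp add: H_def mult.assoc)
  finally have "zabs \<zeta> * cmod p * cmod g \<le> H" using zabs_ge_1 by simp
  then have "zabs \<zeta> * cmod p \<le> H / cmod g" using g_nonzero by (simp add: pos_le_divide_eq)
  also have "\<dots> \<le> H / (c_g / Om)"
    using norm_g_ge H g_nonzero cone_constants_pos jomega2_bounds by (intro divide_left_mono) auto
  also have "\<dots> = C_p s * Om * Mfun s lam \<zeta> * hnorm2 \<nu> s \<zeta> (f1, f2)"
    using cone_constants_pos by (simp add: H_def C_p_def field_simps)
  finally show ?thesis .
qed

lemma hnorm2_pressure_part:
  assumes "t < 5/2"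
  shows "hnorm2 \<nu> t \<zeta> (\<lambda>k. - (\<i> * \<xi> * p) * (cc k / sy k), \<lambda>k. - (\<i> * \<eta> * p) * (cc k / sy k))
    = zabs \<zeta> * cmod p * hnorm \<nu> t \<zeta> (\<lambda>k. cc k / sy k)"
proof -
  note cs = Hs_coef_div_symb(1)[OF assms]
  define h where "h = hnorm \<nu> t \<zeta> (\<lambda>k. cc k / sy k)"
  have "(cmod (\<i> * \<xi> * p))^2 + (cmod (\<i> * \<eta> * p))^2 = (zabs \<zeta> * cmod p)^2"
    using zabs_power2 by (simp add: norm_mult power_mult_distrib zabs2_def algebra_simps)
  then have "(cmod (- (\<i> * \<xi> * p)) * h)^2 + (cmod (- (\<i> * \<eta> * p)) * h)^2 = (zabs \<zeta> * cmod p * h)^2"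
    by (simp only: norm_minus_cancel power_mult_distrib flip: distrib_right)
  moreover have "0 \<le> zabs \<zeta> * cmod p * h" using hnorm_nonneg[OF cs] zabs_ge_1 by (simp add: h_def)
  ultimately show ?thesis
    unfolding hnorm2_def fst_conv snd_conv Hs_cmult(2)[OF cs] h_def[symmetric] by simp
qed

lemma pressure_part_estimate:
  fixes p :: complex
  assumes "-5/2 < s" "s < 1/2"
  defines "Y1 \<equiv> (\<lambda>k. - (\<i> * \<xi> * p) * (cc k / sy k), \<lambda>k. - (\<i> * \<eta> * p) * (cc k / sy k))"
  shows "Mfun (-s-2) lam \<zeta> / Mfun (-s) lam \<zeta> * hnorm2 \<nu> s \<zeta> Y1 + hnorm2 \<nu> (s+2) \<zeta> Y1
    \<le> (sqrt (C_E s) + sqrt (C_E (s + 2))) * Mfun (-s-2) lam \<zeta> * (zabs \<zeta> * cmod p)"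
proof -
  define Z where "Z = zabs \<zeta> * cmod p"
  define M0 where "M0 = Mfun (-s) lam \<zeta>"
  define M2 where "M2 = Mfun (-s-2) lam \<zeta>"
  have Z: "0 \<le> Z" using zabs_ge_1 by (simp add: Z_def)
  have M: "0 \<le> M0" "0 \<le> M2" using assms(2) by (simp_all add: M0_def M2_def Mfun_nonneg)
  have "hnorm2 \<nu> s \<zeta> Y1 = Z * hnorm \<nu> s \<zeta> (\<lambda>k. cc k / sy k)"
    unfolding Y1_def Z_def using assms by (intro hnorm2_pressure_part) simp
  also have "\<dots> \<le> Z * (sqrt (C_E s) * M0)"
    using Hs_coef_div_symb(2)[of s] assms Z unfolding M0_def by (intro mult_left_mono) auto
  finally have "hnorm2 \<nu> s \<zeta> Y1 \<le> Z * (sqrt (C_E s) * M0)" .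
  then have "M2 / M0 * hnorm2 \<nu> s \<zeta> Y1 \<le> M2 / M0 * (Z * (sqrt (C_E s) * M0))"
    using M by (intro mult_left_mono) auto
  also have "\<dots> \<le> Z * sqrt (C_E s) * M2"
    using M Z C_E_nonneg by (cases "M0 = 0") (auto simp: field_simps) \<comment> \<open>\<open>x / 0 = 0\<close> covers \<open>M0 = 0\<close>\<close>
  finally have "M2 / M0 * hnorm2 \<nu> s \<zeta> Y1 \<le> Z * sqrt (C_E s) * M2" .
  moreover have "hnorm2 \<nu> (s + 2) \<zeta> Y1 = Z * hnorm \<nu> (s + 2) \<zeta> (\<lambda>k. cc k / sy k)"
    unfolding Y1_def Z_def using assms by (intro hnorm2_pressure_part) simp
  moreover have "\<dots> \<le> Z * (sqrt (C_E (s + 2)) * M2)"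
    using Hs_coef_div_symb(2)[of "s + 2"] assms Z unfolding M2_def by (intro mult_left_mono) auto
  ultimately show ?thesis by (simp add: Z_def M0_def M2_def algebra_simps)
qed

lemma resolvent_estimate:
  assumes "f \<in> Hs \<nu> s \<zeta>"
  shows "Om * hnorm \<nu> s \<zeta> (\<lambda>k. f k / sy k) + hnorm \<nu> (s + 2) \<zeta> (\<lambda>k. f k / sy k) \<le> C_res * hnorm \<nu> s \<zeta> f"
proof -
  note r = Hs_div_symb[OF assms]
  have "Om * hnorm \<nu> s \<zeta> (\<lambda>k. f k / sy k) \<le> Om * (1 / (c_symb * Om) * hnorm \<nu> s \<zeta> f)"
    using r(4) jomega2_bounds by (intro mult_left_mono) auto
  also have "\<dots> = hnorm \<nu> s \<zeta> f / c_symb" using jomega2_bounds by (simp add: field_simps)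
  finally show ?thesis
    using r(2) by (simp add: C_res_def add_divide_distrib distrib_right)
qed

lemma resolvent_estimate2:
  assumes "f1 \<in> Hs \<nu> s \<zeta>" "f2 \<in> Hs \<nu> s \<zeta>"
  defines "Y2 \<equiv> (\<lambda>k. f1 k / sy k, \<lambda>k. f2 k / sy k)"
  shows "Om * hnorm2 \<nu> s \<zeta> Y2 + hnorm2 \<nu> (s + 2) \<zeta> Y2 \<le> C_res * hnorm2 \<nu> s \<zeta> (f1, f2)"
proof -
  note r1 = Hs_div_symb[OF assms(1)] and r2 = Hs_div_symb[OF assms(2)]
  have B: "0 \<le> 1 / (c_symb * Om)" "0 \<le> C_weight / c_symb" using constants_pos jomega2_bounds by auto
  have "Om * hnorm2 \<nu> s \<zeta> Y2 \<le> Om * (1 / (c_symb * Om) * hnorm2 \<nu> s \<zeta> (f1, f2))"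
    using r1(3,4) r2(3,4) B jomega2_bounds
    by (intro mult_left_mono hnorm2_le_mult) (auto simp: Y2_def)
  also have "\<dots> = hnorm2 \<nu> s \<zeta> (f1, f2) / c_symb" using jomega2_bounds by (simp add: field_simps)
  finally have "Om * hnorm2 \<nu> s \<zeta> Y2 \<le> hnorm2 \<nu> s \<zeta> (f1, f2) / c_symb" .
  moreover have "hnorm2 \<nu> (s + 2) \<zeta> Y2 \<le> C_weight / c_symb * hnorm2 \<nu> s \<zeta> (f1, f2)"
    by (rule hnorm2_le_mult) (use r1(1,2) r2(1,2) B in \<open>auto simp: Y2_def\<close>)
  moreover have "C_res * hnorm2 \<nu> s \<zeta> (f1, f2) = hnorm2 \<nu> s \<zeta> (f1, f2) / c_symb + C_weight / c_symb * hnorm2 \<nu> s \<zeta> (f1, f2)"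
    by (simp add: C_res_def add_divide_distrib distrib_right)
  ultimately show ?thesis by linarith
qed

lemma L0_splitting:
  assumes "-5/2 < s" "s < 1/2"
    and X: "(u, v, p0, \<theta>) \<in> L0dom a \<nu> s \<zeta>" and L: "L0 a \<nu> lam \<zeta> (u, v, p0, \<theta>) = (f1, f2, f3)"
  shows "\<exists>Y1 Y2. fst Y1 \<in> Hs \<nu> (s + 2) \<zeta> \<and> snd Y1 \<in> Hs \<nu> (s + 2) \<zeta>
           \<and> fst Y2 \<in> Hs \<nu> (s + 2) \<zeta> \<and> snd Y2 \<in> Hs \<nu> (s + 2) \<zeta>
           \<and> u = (\<lambda>k. fst Y1 k + fst Y2 k) \<and> v = (\<lambda>k. snd Y1 k + snd Y2 k)
           \<and> zabs \<zeta> * cmod p0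
               \<le> C_L0 s * jomega2 lam \<zeta> * Mfun s lam \<zeta> * hnorm2 \<nu> s \<zeta> (f1, f2)
           \<and> Mfun (-s-2) lam \<zeta> / Mfun (-s) lam \<zeta> * hnorm2 \<nu> s \<zeta> Y1 + hnorm2 \<nu> (s+2) \<zeta> Y1
               \<le> C_L0 s * jomega2 lam \<zeta> * Mfun s lam \<zeta> * Mfun (-s-2) lam \<zeta> * hnorm2 \<nu> s \<zeta> (f1, f2)
           \<and> jomega2 lam \<zeta> * hnorm2 \<nu> s \<zeta> Y2 + hnorm2 \<nu> (s+2) \<zeta> Y2
               \<le> C_L0 s * hnorm2 \<nu> s \<zeta> (f1, f2)
           \<and> jomega2 lam \<zeta> * hnorm \<nu> s \<zeta> \<theta> + hnorm \<nu> (s+2) \<zeta> \<theta>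
               \<le> C_L0 s * hnorm \<nu> s \<zeta> f3"
proof -
  note sol = L0_solution[OF assms]
  note f = sol(1-3)
  define Y1 where "Y1 = (\<lambda>k. - (\<i> * \<xi> * p0) * (cc k / sy k), \<lambda>k. - (\<i> * \<eta> * p0) * (cc k / sy k))"
  define Y2 where "Y2 = (\<lambda>k. f1 k / sy k, \<lambda>k. f2 k / sy k)"
  define H where "H = hnorm2 \<nu> s \<zeta> (f1, f2)"
  have uv: "u = (\<lambda>k. fst Y1 k + fst Y2 k)" "v = (\<lambda>k. snd Y1 k + snd Y2 k)"
    using sol(5,6) by (auto simp: Y1_def Y2_def diff_divide_distrib)
  have mem: "fst Y1 \<in> Hs \<nu> (s + 2) \<zeta>" "snd Y1 \<in> Hs \<nu> (s + 2) \<zeta>" "fst Y2 \<in> Hs \<nu> (s + 2) \<zeta>" "snd Y2 \<in> Hs \<nu> (s + 2) \<zeta>"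
  proof -
    have "(\<lambda>k. cc k / sy k) \<in> Hs \<nu> (s + 2) \<zeta>" using assms(2) by (intro Hs_coef_div_symb) simp
    from Hs_cmult(1)[OF this] show "fst Y1 \<in> Hs \<nu> (s + 2) \<zeta>" "snd Y1 \<in> Hs \<nu> (s + 2) \<zeta>"
      unfolding Y1_def fst_conv snd_conv by blast+
    show "fst Y2 \<in> Hs \<nu> (s + 2) \<zeta>" "snd Y2 \<in> Hs \<nu> (s + 2) \<zeta>"
      using Hs_div_symb(1)[OF f(1)] Hs_div_symb(1)[OF f(2)] by (simp_all add: Y2_def)
  qed
  have H: "0 \<le> H" "0 \<le> hnorm \<nu> s \<zeta> f3" using f by (simp_all add: H_def hnorm2_def hnorm_nonneg)
  have M: "0 \<le> Om * Mfun s lam \<zeta> * H" "0 \<le> Om * Mfun s lam \<zeta> * Mfun (-s-2) lam \<zeta> * H"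
    using Mfun_nonneg assms jomega2_bounds H by simp_all
  note a = pressure_estimate[OF assms(1) f(1,2) sol(4)]
  have a': "zabs \<zeta> * cmod p0 \<le> C_L0 s * Om * Mfun s lam \<zeta> * H"
    using a mult_right_mono[OF C_L0_ge(1)[of s] M(1)] by (simp add: H_def mult_ac)
  have "(sqrt (C_E s) + sqrt (C_E (s + 2))) * Mfun (-s-2) lam \<zeta> * (zabs \<zeta> * cmod p0)
      \<le> (sqrt (C_E s) + sqrt (C_E (s + 2))) * Mfun (-s-2) lam \<zeta> * (C_p s * Om * Mfun s lam \<zeta> * H)"
    using a Mfun_nonneg[of "-s-2"] assms C_E_nonneg by (intro mult_left_mono) (auto simp: H_def)
  also have "\<dots> \<le> C_L0 s * Om * Mfun s lam \<zeta> * Mfun (-s-2) lam \<zeta> * H"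
    using mult_right_mono[OF C_L0_ge(2)[of s] M(2)] by (simp add: mult_ac)
  finally have b: "Mfun (-s-2) lam \<zeta> / Mfun (-s) lam \<zeta> * hnorm2 \<nu> s \<zeta> Y1 + hnorm2 \<nu> (s+2) \<zeta> Y1
      \<le> C_L0 s * Om * Mfun s lam \<zeta> * Mfun (-s-2) lam \<zeta> * H"
    using pressure_part_estimate[OF assms(1,2), of p0] unfolding Y1_def by linarith
  have c: "Om * hnorm2 \<nu> s \<zeta> Y2 + hnorm2 \<nu> (s+2) \<zeta> Y2 \<le> C_L0 s * H"
    using resolvent_estimate2[OF f(1,2)] mult_right_mono[OF C_L0_ge(3)[of s] H(1)]
    unfolding Y2_def H_def by linarith
  have d: "Om * hnorm \<nu> s \<zeta> \<theta> + hnorm \<nu> (s+2) \<zeta> \<theta> \<le> C_L0 s * hnorm \<nu> s \<zeta> f3"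
    using resolvent_estimate[OF f(3)] mult_right_mono[OF C_L0_ge(3)[of s] H(2)]
    unfolding sol(7) by linarith
  show ?thesis
    using mem uv a' b c d unfolding H_def by blast
qed

end

theorem theorem2:
  fixes a \<nu> \<delta>1 \<delta>2 \<sigma> :: real
  assumes "a > 0" and "\<nu> > 0"
    and "0 < \<delta>2" and "\<delta>2 < min (\<nu> * pi^2 / (2 * a^2)) (\<nu> / 2)" and "\<delta>1 > 0"
    and "-3/2 < \<sigma>" and "\<sigma> < 1/2" and "\<sigma> \<noteq> -1/2"
  shows "\<exists>C::real. \<forall>lam \<zeta>. lam \<in> Sset \<delta>1 \<delta>2 \<and> \<zeta> \<noteq> (0, 0) \<longrightarrow>
     L0_continuous \<nu> \<sigma> \<zeta> (L0 a \<nu> lam \<zeta>) (L0dom a \<nu> \<sigma> \<zeta>)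
     \<and> bij_betw (L0 a \<nu> lam \<zeta>) (L0dom a \<nu> \<sigma> \<zeta>) (L0cod \<nu> \<sigma> \<zeta>)
     \<and> (\<forall>u v p0 \<theta> f1 f2 f3. (u, v, p0, \<theta>) \<in> L0dom a \<nu> \<sigma> \<zeta>
          \<and> L0 a \<nu> lam \<zeta> (u, v, p0, \<theta>) = (f1, f2, f3) \<longrightarrow>
        (\<exists>Y1 Y2. fst Y1 \<in> Hs \<nu> (\<sigma> + 2) \<zeta> \<and> snd Y1 \<in> Hs \<nu> (\<sigma> + 2) \<zeta>
           \<and> fst Y2 \<in> Hs \<nu> (\<sigma> + 2) \<zeta> \<and> snd Y2 \<in> Hs \<nu> (\<sigma> + 2) \<zeta>
           \<and> u = (\<lambda>k. fst Y1 k + fst Y2 k) \<and> v = (\<lambda>k. snd Y1 k + snd Y2 k)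
           \<and> zabs \<zeta> * cmod p0
               \<le> C * jomega2 lam \<zeta> * Mfun \<sigma> lam \<zeta> * hnorm2 \<nu> \<sigma> \<zeta> (f1, f2)
           \<and> Mfun (-\<sigma>-2) lam \<zeta> / Mfun (-\<sigma>) lam \<zeta> * hnorm2 \<nu> \<sigma> \<zeta> Y1 + hnorm2 \<nu> (\<sigma>+2) \<zeta> Y1
               \<le> C * jomega2 lam \<zeta> * Mfun \<sigma> lam \<zeta> * Mfun (-\<sigma>-2) lam \<zeta> * hnorm2 \<nu> \<sigma> \<zeta> (f1, f2)
           \<and> jomega2 lam \<zeta> * hnorm2 \<nu> \<sigma> \<zeta> Y2 + hnorm2 \<nu> (\<sigma>+2) \<zeta> Y2
               \<le> C * hnorm2 \<nu> \<sigma> \<zeta> (f1, f2)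
           \<and> jomega2 lam \<zeta> * hnorm \<nu> \<sigma> \<zeta> \<theta> + hnorm \<nu> (\<sigma>+2) \<zeta> \<theta>
               \<le> C * hnorm \<nu> \<sigma> \<zeta> f3))"
proof -
  interpret sector_params a \<nu> \<delta>1 \<delta>2
    using assms by unfold_locales auto
  have mode: "fourier_mode a \<nu> \<delta>1 \<delta>2 lam \<zeta>" if "lam \<in> Sset \<delta>1 \<delta>2 \<and> \<zeta> \<noteq> (0, 0)" for lam \<zeta>
    using that by unfold_locales auto
  have \<sigma>: "-5/2 < \<sigma>" "\<sigma> < 1/2" using assms by auto
  show ?thesis
  proof (intro exI[of _ "C_L0 \<sigma>"] allI impI conjI)
    fix lam :: complex and \<zeta> :: "int \<times> int"
    assume "lam \<in> Sset \<delta>1 \<delta>2 \<and> \<zeta> \<noteq> (0, 0)"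
    note m = mode[OF this]
    show "L0_continuous \<nu> \<sigma> \<zeta> (L0 a \<nu> lam \<zeta>) (L0dom a \<nu> \<sigma> \<zeta>)"
      by (rule fourier_mode.L0_continuous_on_dom[OF m \<sigma>(2)])
    show "bij_betw (L0 a \<nu> lam \<zeta>) (L0dom a \<nu> \<sigma> \<zeta>) (L0cod \<nu> \<sigma> \<zeta>)"
      by (rule fourier_mode.L0_bij[OF m \<sigma>])
  qed (rule fourier_mode.L0_splitting[OF mode \<sigma>], auto)
qed

end
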